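(* Let $E>0$ and let $(H_0,h)$ be one of (a) $H_0=E(\sigma_z\otimes I_2\otimes I_2+I_2\otimes\sigma_z\otimes I_2+I_2\otimes I_2\otimes\sigma_z)$, $h=E\sigma_z$; (b) $H_0=E\sum_{k=1}^3(\sigma_x^{(k)}+\sigma_y^{(k)})$, $h=E(\sigma_x+\sigma_y)$, where $\sigma^{(k)}$ denotes $\sigma$ acting on qubit $k$ and identity elsewhere. Set $H_A=H_B=H_C=h$. Let $H_{\mathrm{int}}$ be any Hermitian operator on $(\mathbb{C}^2)^{\otimes3}$ and $H=H_0+H_{\mathrm{int}}$. For any three-qubit density matrix $\varrho$ with single-qubit reduced states $\varrho_A,\varrho_B,\varrho_C$, if $\mathcal{C}(\varrho;H)\ge\mathcal{C}(\varrho;H_0)$ then $$\mathcal{C}(\varrho_A;H_A)+\mathcal{C}(\varrho_B;H_B)+\mathcal{C}(\varrho_C;H_C)\le\mathcal{C}(\varrho;H).$$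
   Context: Quantum battery capacity: for Hermitian $H$ on $\mathbb{C}^d$ with eigenvalues $\epsilon_0\le\dots\le\epsilon_{d-1}$ and density matrix $\rho$ with eigenvalues $\lambda_0\le\dots\le\lambda_{d-1}$, $\mathcal{C}(\rho;H)=\sum_i\epsilon_i(\lambda_i-\lambda_{d-1-i})$. $\sigma_x,\sigma_y,\sigma_z$ are the Pauli matrices. *)

theory Defs
  imports "Jordan_Normal_Form.Char_Poly" "HOL-Computational_Algebra.Polynomial"
begin

definition mtrace :: "complex mat \<Rightarrow> complex" where
  "mtrace A = (\<Sum>i<dim_row A. A $$ (i, i))"

definition hermitian :: "complex mat \<Rightarrow> bool" where
  "hermitian A \<longleftrightarrow> square_mat A \<and>
     (\<forall>i<dim_row A. \<forall>j<dim_col A. A $$ (i, j) = cnj (A $$ (j, i)))"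

definition psd :: "complex mat \<Rightarrow> bool" where
  "psd A \<longleftrightarrow> square_mat A \<and>
     (\<forall>v \<in> carrier_vec (dim_row A).
        (let q = (\<Sum>i<dim_row A. cnj (v $ i) * (A *\<^sub>v v) $ i) in q \<in> \<real> \<and> 0 \<le> Re q))"

definition density_matrix :: "nat \<Rightarrow> complex mat \<Rightarrow> bool" where
  "density_matrix d \<rho> \<longleftrightarrow> \<rho> \<in> carrier_mat d d \<and> hermitian \<rho> \<and> psd \<rho> \<and> mtrace \<rho> = 1"

definition kron :: "complex mat \<Rightarrow> complex mat \<Rightarrow> complex mat" where
  "kron A B = mat (dim_row A * dim_row B) (dim_col A * dim_col B)
     (\<lambda>(i, j). A $$ (i div dim_row B, j div dim_col B) * B $$ (i mod dim_row B, j mod dim_col B))"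

text \<open>For a Hermitian matrix all roots of the characteristic
  polynomial are real, so taking real parts loses nothing.\<close>
definition eigvals_sorted :: "complex mat \<Rightarrow> real list" where
  "eigvals_sorted A = sorted_list_of_multiset (image_mset Re (proots (char_poly A)))"

definition capacity :: "complex mat \<Rightarrow> complex mat \<Rightarrow> real" where
  "capacity \<rho> H = (let d = dim_row H; ev = eigvals_sorted H; lv = eigvals_sorted \<rho> in
     (\<Sum>i<d. ev ! i * (lv ! i - lv ! (d - 1 - i))))"

definition I2 :: "complex mat" where "I2 = 1\<^sub>m 2"
definition sigma_x :: "complex mat" where "sigma_x = mat_of_rows_list 2 [[0, 1], [1, 0]]"
definition sigma_y :: "complex mat" where "sigma_y = mat_of_rows_list 2 [[0, -\<i>], [\<i>, 0]]"
definition sigma_z :: "complex mat" where "sigma_z = mat_of_rows_list 2 [[1, 0], [0, -1]]"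

definition on_qubit :: "nat \<Rightarrow> complex mat \<Rightarrow> complex mat" where
  "on_qubit k s = (if k = 1 then kron s (kron I2 I2)
                   else if k = 2 then kron I2 (kron s I2)
                   else kron I2 (kron I2 s))"

definition red_A :: "complex mat \<Rightarrow> complex mat" where
  "red_A \<rho> = mat 2 2 (\<lambda>(i, j). \<Sum>b<2. \<Sum>c<2. \<rho> $$ (4*i + 2*b + c, 4*j + 2*b + c))"
definition red_B :: "complex mat \<Rightarrow> complex mat" where
  "red_B \<rho> = mat 2 2 (\<lambda>(i, j). \<Sum>a<2. \<Sum>c<2. \<rho> $$ (4*a + 2*i + c, 4*a + 2*j + c))"
definition red_C :: "complex mat \<Rightarrow> complex mat" where
  "red_C \<rho> = mat 2 2 (\<lambda>(i, j). \<Sum>a<2. \<Sum>b<2. \<rho> $$ (4*a + 2*b + i, 4*a + 2*b + j))"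

definition H0_a :: "real \<Rightarrow> complex mat" where
  "H0_a E = complex_of_real E \<cdot>\<^sub>m
     (on_qubit 1 sigma_z + on_qubit 2 sigma_z + on_qubit 3 sigma_z)"
definition h_a :: "real \<Rightarrow> complex mat" where
  "h_a E = complex_of_real E \<cdot>\<^sub>m sigma_z"

definition H0_b :: "real \<Rightarrow> complex mat" where
  "H0_b E = complex_of_real E \<cdot>\<^sub>m
     ((on_qubit 1 sigma_x + on_qubit 1 sigma_y) + (on_qubit 2 sigma_x + on_qubit 2 sigma_y)
      + (on_qubit 3 sigma_x + on_qubit 3 sigma_y))"
definition h_b :: "real \<Rightarrow> complex mat" where
  "h_b E = complex_of_real E \<cdot>\<^sub>m (sigma_x + sigma_y)"

end

theory Submission
  imports Defs "Jordan_Normal_Form.Schur_Decomposition" "HOL-Combinatorics.Permutations"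
begin

(* The hypothesis C(rho; H) >= C(rho; H0) reduces the claim to bounding the local capacities by
   C(rho; H0).  The spectra of h and H0 are symmetric about 0, namely (-e, e) and
   e (-3, -1, -1, -1, 1, 1, 1, 3) (case (b) is unitarily equivalent to case (a) with E replaced by
   sqrt 2 E), so C(R; h) = 2e (mu_1 - mu_0) for a qubit state R and C(rho; H0) = 2e sum_j c_j lambda_j.
   Let V = U_A (x) U_B (x) U_C be a product of eigenbases of the reduced states and W an eigenbasis
   of rho.  In the basis V the reduced states are diagonal, so the local eigenvalues are partial sums
   of the diagonal of V^H rho V, and the sum of the local gaps mu_1 - mu_0 equals
   sum_{x,j} w_x |(V^H W)_{xj}|^2 lambda_j with weights w_x in {-3, -1, 1, 3}.  As V^H W is unitary,
   the matrix |(V^H W)_{xj}|^2 is doubly stochastic, and a rearrangement inequality bounds the sum by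
   sum_j c_j lambda_j, where c lists the weights in increasing order. *)

lemma proots_prod_linear_factors: "proots (\<Prod>a\<leftarrow>as. [:-a, 1:]) = mset (as :: complex list)"
proof (induction as)
  case (Cons a as)
  have "(\<Prod>a\<leftarrow>as. [:-a, 1:]) \<noteq> (0 :: complex poly)"
    by (auto simp: prod_list_zero_iff)
  then have "proots ([:-a, 1:] * (\<Prod>a\<leftarrow>as. [:-a, 1:])) = proots [:-a, 1:] + proots (\<Prod>a\<leftarrow>as. [:-a, 1:])"
    by (intro proots_mult) auto
  then show ?case using Cons proots_linear_factor[of "-a"] by simp
qed simp

lemma eigvals_sorted_linear_factors:
  assumes "char_poly A = (\<Prod>a\<leftarrow>as. [:-a, 1:])"
  shows "eigvals_sorted A = sort (map Re as)"
  unfolding eigvals_sorted_def assms proots_prod_linear_factors by (simp flip: mset_map)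

lemma length_eigvals_sorted:
  assumes "A \<in> carrier_mat n n"
  shows "length (eigvals_sorted A) = n"
  using char_poly_factorized[OF assms] eigvals_sorted_linear_factors by auto

lemma eigvals_sorted_similar: "similar_mat A B \<Longrightarrow> eigvals_sorted A = eigvals_sorted B"
  unfolding eigvals_sorted_def by (simp add: char_poly_similar)

lemma eigvals_sorted_upper_triangular:
  assumes "A \<in> carrier_mat n n" and "upper_triangular A"
  shows "eigvals_sorted A = sort (map Re (diag_mat A))"
  by (rule eigvals_sorted_linear_factors[OF char_poly_upper_triangular[OF assms]])

lemma eigvals_sorted_mat_diag:
  "eigvals_sorted (mat_diag n (\<lambda>k. complex_of_real (d k))) = sort (map d [0..<n])"
  by (subst eigvals_sorted_upper_triangular[of _ n])
    (auto simp: mat_diag_def upper_triangular_def diag_mat_def intro!: arg_cong[where f = sort] map_cong)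


lemma mat_adjoint_dim [simp]:
  "dim_row (mat_adjoint A) = dim_col A" "dim_col (mat_adjoint A) = dim_row A"
  unfolding mat_adjoint_def by simp_all

lemma mat_adjoint_carrier [simp]: "A \<in> carrier_mat n m \<Longrightarrow> mat_adjoint A \<in> carrier_mat m n"
  by (rule carrier_matI) auto

lemma mat_adjoint_index [simp]:
  "i < dim_col A \<Longrightarrow> j < dim_row A \<Longrightarrow> mat_adjoint A $$ (i, j) = cnj (A $$ (j, i))"
  unfolding mat_adjoint_def by (simp add: mat_of_rows_index)

lemma mat_adjoint_adjoint [simp]: "mat_adjoint (mat_adjoint A) = (A :: complex mat)"
  by (rule eq_matI) simp_all

lemma mat_adjoint_mult:
  fixes A B :: "complex mat"
  assumes "A \<in> carrier_mat n m" and "B \<in> carrier_mat m k"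
  shows "mat_adjoint (A * B) = mat_adjoint B * mat_adjoint A"
proof (rule eq_matI)
  fix i j assume "i < dim_row (mat_adjoint B * mat_adjoint A)" "j < dim_col (mat_adjoint B * mat_adjoint A)"
  with assms show "mat_adjoint (A * B) $$ (i, j) = (mat_adjoint B * mat_adjoint A) $$ (i, j)"
    by (simp add: scalar_prod_def cnj_sum mult.commute)
qed (use assms in auto)

lemma hermitian_iff_adjoint:
  assumes "A \<in> carrier_mat n n"
  shows "hermitian A \<longleftrightarrow> mat_adjoint A = A"
proof
  assume "hermitian A"
  then have "cnj (A $$ (j, i)) = A $$ (i, j)" if "i < n" "j < n" for i j
    using assms that unfolding hermitian_def by (metis carrier_matD)
  then show "mat_adjoint A = A"
    using assms by (intro eq_matI) auto
next
  assume adj: "mat_adjoint A = A"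
  have "A $$ (i, j) = cnj (A $$ (j, i))" if "i < n" "j < n" for i j
  proof -
    have "mat_adjoint A $$ (i, j) = A $$ (i, j)"
      by (simp only: adj)
    then show ?thesis
      using assms that by simp
  qed
  then show "hermitian A"
    using assms unfolding hermitian_def square_mat.simps by (metis carrier_matD)
qed

definition unitary :: "nat \<Rightarrow> complex mat \<Rightarrow> bool" where
  "unitary n U \<longleftrightarrow> U \<in> carrier_mat n n \<and> mat_adjoint U * U = 1\<^sub>m n"

lemma unitary_carrier: "unitary n U \<Longrightarrow> U \<in> carrier_mat n n"
  unfolding unitary_def by simp

lemma unitary_adjoint_mult: "unitary n U \<Longrightarrow> mat_adjoint U * U = 1\<^sub>m n"
  unfolding unitary_def by simp

lemma unitary_mult_adjoint:
  assumes "unitary n U"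
  shows "U * mat_adjoint U = 1\<^sub>m n"
proof (rule mat_mult_left_right_inverse)
  show U: "U \<in> carrier_mat n n" and "mat_adjoint U * U = 1\<^sub>m n"
    using assms by (simp_all add: unitary_def)
  show "mat_adjoint U \<in> carrier_mat n n"
    using U by simp
qed

lemma unitaryI:
  assumes "U \<in> carrier_mat n n"
    and "\<And>i j. i < n \<Longrightarrow> j < n \<Longrightarrow> (\<Sum>k<n. cnj (U $$ (k, i)) * U $$ (k, j)) = (if i = j then 1 else 0)"
  shows "unitary n U"
  unfolding unitary_def
  using assms by (auto intro!: eq_matI simp: scalar_prod_def atLeast0LessThan)

lemma unitary_cols_orthonormal:
  assumes "unitary n U" "i < n" "j < n"
  shows "(\<Sum>k<n. cnj (U $$ (k, i)) * U $$ (k, j)) = (if i = j then 1 else 0)"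
  using arg_cong[OF unitary_adjoint_mult[OF assms(1)], of "\<lambda>M. M $$ (i, j)"]
    unitary_carrier[OF assms(1)] assms(2,3)
  by (simp add: scalar_prod_def atLeast0LessThan)

lemma unitary_rows_orthonormal:
  assumes "unitary n U" "i < n" "j < n"
  shows "(\<Sum>k<n. U $$ (i, k) * cnj (U $$ (j, k))) = (if i = j then 1 else 0)"
  using arg_cong[OF unitary_mult_adjoint[OF assms(1)], of "\<lambda>M. M $$ (i, j)"]
    unitary_carrier[OF assms(1)] assms(2,3)
  by (simp add: scalar_prod_def atLeast0LessThan)

lemma unitary_mult:
  assumes U: "unitary n U" and V: "unitary n V"
  shows "unitary n (U * V)"
proof -
  have carr: "U \<in> carrier_mat n n" "V \<in> carrier_mat n n"
    "mat_adjoint U \<in> carrier_mat n n" "mat_adjoint V \<in> carrier_mat n n"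
    using U V by (simp_all add: unitary_carrier)
  have "mat_adjoint (U * V) * (U * V) = mat_adjoint V * (mat_adjoint U * (U * V))"
    using carr by (simp add: mat_adjoint_mult[of U n n V n] assoc_mult_mat[of _ n n _ n _ n])
  also have "\<dots> = mat_adjoint V * ((mat_adjoint U * U) * V)"
    using carr by (simp add: assoc_mult_mat[of _ n n _ n _ n])
  also have "\<dots> = mat_adjoint V * V"
    using carr unitary_adjoint_mult[OF U] by simp
  also have "\<dots> = 1\<^sub>m n"
    by (rule unitary_adjoint_mult[OF V])
  finally show ?thesis
    using carr unfolding unitary_def by simp
qed

lemma unitary_adjoint: "unitary n U \<Longrightarrow> unitary n (mat_adjoint U)"
  unfolding unitary_def using unitary_mult_adjoint[of n U]
  by (auto simp: unitary_def)

lemma unitary_row_abs_sq_sum: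
  assumes "unitary n U" "i < n"
  shows "(\<Sum>k<n. (cmod (U $$ (i, k)))\<^sup>2) = 1"
proof -
  have "complex_of_real (\<Sum>k<n. (cmod (U $$ (i, k)))\<^sup>2) = (\<Sum>k<n. U $$ (i, k) * cnj (U $$ (i, k)))"
    by (simp only: of_real_sum complex_norm_square)
  also have "\<dots> = 1"
    using unitary_rows_orthonormal[OF assms assms(2)] by simp
  finally show ?thesis
    by (simp only: of_real_eq_1_iff)
qed

lemma unitary_col_abs_sq_sum:
  assumes "unitary n U" "j < n"
  shows "(\<Sum>k<n. (cmod (U $$ (k, j)))\<^sup>2) = 1"
proof -
  have "(\<Sum>k<n. (cmod (U $$ (k, j)))\<^sup>2) = (\<Sum>k<n. (cmod (mat_adjoint U $$ (j, k)))\<^sup>2)"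
    using unitary_carrier[OF assms(1)] assms(2) by (intro sum.cong) auto
  also have "\<dots> = 1"
    using unitary_row_abs_sq_sum[OF unitary_adjoint[OF assms(1)] assms(2)] .
  finally show ?thesis .
qed

lemma diag_conj_index:
  assumes "U \<in> carrier_mat n m" "i < n" "j < n"
  shows "(U * mat_diag m d * mat_adjoint U) $$ (i, j) = (\<Sum>k<m. U $$ (i, k) * d k * cnj (U $$ (j, k)))"
  using assms by (simp add: mat_diag_mult_right[OF assms(1)] scalar_prod_def atLeast0LessThan)

lemma diag_conj_diagonal_entry:
  assumes "M \<in> carrier_mat n n" "x < n"
  shows "(M * mat_diag n (\<lambda>j. complex_of_real (l j)) * mat_adjoint M) $$ (x, x)
    = complex_of_real (\<Sum>j<n. l j * (cmod (M $$ (x, j)))\<^sup>2)"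
proof -
  have "(M * mat_diag n (\<lambda>j. complex_of_real (l j)) * mat_adjoint M) $$ (x, x)
      = (\<Sum>j<n. M $$ (x, j) * complex_of_real (l j) * cnj (M $$ (x, j)))"
    by (rule diag_conj_index[OF assms(1,2,2)])
  also have "\<dots> = complex_of_real (\<Sum>j<n. l j * (cmod (M $$ (x, j)))\<^sup>2)"
    unfolding of_real_sum of_real_mult complex_norm_square by (simp add: mult_ac)
  finally show ?thesis .
qed

lemma adjoint_sandwich_index:
  assumes "K \<in> carrier_mat N M" "\<sigma> \<in> carrier_mat N N" "a < M" "b < M"
  shows "(mat_adjoint K * \<sigma> * K) $$ (a, b) = (\<Sum>p<N. \<Sum>q<N. cnj (K $$ (p, a)) * \<sigma> $$ (p, q) * K $$ (q, b))"
  using assms by (simp add: scalar_prod_def atLeast0LessThan sum_distrib_left sum_distrib_right mult.assoc)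
    (subst sum.swap, simp)

lemma unitary_conj_cancel:
  assumes V: "unitary n V" and A: "A \<in> carrier_mat n n"
  shows "V * (mat_adjoint V * A * V) * mat_adjoint V = A"
proof -
  let ?W = "mat_adjoint V"
  have c: "V \<in> carrier_mat n n" "?W \<in> carrier_mat n n"
    using unitary_carrier[OF V] by auto
  have [simp]: "?W * A \<in> carrier_mat n n" "?W * A * V \<in> carrier_mat n n" "V * ?W \<in> carrier_mat n n"
    "A * V \<in> carrier_mat n n" "V * (?W * A * V) \<in> carrier_mat n n" "V * ?W * A \<in> carrier_mat n n"
    "A * (V * ?W) \<in> carrier_mat n n" "?W * (A * V) \<in> carrier_mat n n" "V * (?W * (A * V)) \<in> carrier_mat n n"
    using c A by auto
  have "V * (?W * A * V) * ?W = (V * ?W) * A * (V * ?W)"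
    using c A by (simp add: assoc_mult_mat[of _ n n _ n _ n])
  then show ?thesis
    using A unitary_mult_adjoint[OF V] by simp
qed

lemma adjoint_conj_cancel:
  assumes U: "unitary n U" and D: "D \<in> carrier_mat n n"
  shows "mat_adjoint U * (U * D * mat_adjoint U) * U = D"
  using unitary_conj_cancel[OF unitary_adjoint[OF U] D] by simp

lemma sandwich_adjoint_mult:
  fixes V W D :: "complex mat"
  assumes V: "V \<in> carrier_mat n n" and W: "W \<in> carrier_mat n n" and D: "D \<in> carrier_mat n n"
  shows "mat_adjoint V * (W * D * mat_adjoint W) * V = (mat_adjoint V * W) * D * mat_adjoint (mat_adjoint V * W)"
proof -
  let ?V = "mat_adjoint V" and ?W = "mat_adjoint W"
  have c: "?V \<in> carrier_mat n n" "?W \<in> carrier_mat n n"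
    using V W by auto
  have [simp]: "W * D \<in> carrier_mat n n" "W * D * ?W \<in> carrier_mat n n" "?V * W \<in> carrier_mat n n"
    "D * ?W \<in> carrier_mat n n" "?V * (W * D * ?W) \<in> carrier_mat n n" "?V * W * D \<in> carrier_mat n n"
    "?W * V \<in> carrier_mat n n" "D * (?W * V) \<in> carrier_mat n n" "W * (D * (?W * V)) \<in> carrier_mat n n"
    "D * ?W * V \<in> carrier_mat n n" "W * (D * ?W) \<in> carrier_mat n n"
    using c V W D by auto
  have "mat_adjoint (?V * W) = ?W * V"
    using V W mat_adjoint_mult[of ?V n n W n] by simp
  then show ?thesis
    using c V W D by (simp add: assoc_mult_mat[of _ n n _ n _ n])
qed

lemma sandwich_smult_add3:
  fixes P Q A B C :: "complex mat"
  assumes P: "P \<in> carrier_mat n n" and Q: "Q \<in> carrier_mat n n"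
    and A: "A \<in> carrier_mat n n" and B: "B \<in> carrier_mat n n" and C: "C \<in> carrier_mat n n"
  shows "P * (c \<cdot>\<^sub>m (A + B + C)) * Q = c \<cdot>\<^sub>m (P * A * Q + P * B * Q + P * C * Q)"
proof -
  have PA: "P * A \<in> carrier_mat n n" "P * B \<in> carrier_mat n n" "P * C \<in> carrier_mat n n"
    and AB: "A + B \<in> carrier_mat n n" "P * A + P * B \<in> carrier_mat n n"
    using P A B C by auto
  have "P * (A + B + C) = P * A + P * B + P * C"
    using mult_add_distrib_mat[OF P AB(1) C] mult_add_distrib_mat[OF P A B] by simp
  then have "P * (A + B + C) * Q = (P * A + P * B) * Q + P * C * Q"
    using add_mult_distrib_mat[OF AB(2) PA(3) Q] by simp
  also have "\<dots> = P * A * Q + P * B * Q + P * C * Q"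
    using add_mult_distrib_mat[OF PA(1,2) Q] by simp
  finally have "P * (A + B + C) * Q = P * A * Q + P * B * Q + P * C * Q" .
  moreover have "P * (c \<cdot>\<^sub>m (A + B + C)) * Q = c \<cdot>\<^sub>m (P * (A + B + C) * Q)"
    using P Q AB(1) C by (simp add: mult_smult_distrib[of P n n _ n] mult_smult_assoc_mat[of _ n n Q n])
  ultimately show ?thesis
    by simp
qed

lemma similar_mat_unitary_conj:
  assumes U: "unitary n U" and B: "B \<in> carrier_mat n n"
  shows "similar_mat (U * B * mat_adjoint U) B"
  unfolding similar_mat_def similar_mat_wit_def Let_def
  using unitary_carrier[OF U] B unitary_mult_adjoint[OF U] unitary_adjoint_mult[OF U]
  by (intro exI[of _ U] exI[of _ "mat_adjoint U"]) auto

lemma hermitian_adjoint_conj: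
  assumes A: "A \<in> carrier_mat n n" and U: "U \<in> carrier_mat n n" and "hermitian A"
  shows "hermitian (mat_adjoint U * A * U)"
proof -
  have adj: "mat_adjoint A = A"
    using assms hermitian_iff_adjoint by blast
  have "mat_adjoint (mat_adjoint U * A * U) = mat_adjoint U * mat_adjoint (mat_adjoint U * A)"
    using A U by (intro mat_adjoint_mult) auto
  also have "\<dots> = mat_adjoint U * (mat_adjoint A * U)"
    using A U mat_adjoint_mult[of "mat_adjoint U" n n A n] by simp
  also have "\<dots> = mat_adjoint U * A * U"
    using A U by (simp add: adj assoc_mult_mat[of _ n n _ n _ n])
  moreover have "mat_adjoint U * A * U \<in> carrier_mat n n"
    using A U by (meson mat_adjoint_carrier mult_carrier_mat)
  ultimately show ?thesis
    by (simp add: hermitian_iff_adjoint)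
qed

lemma hermitian_upper_triangular_eq_diag:
  assumes T: "T \<in> carrier_mat n n" and "hermitian T" and ut: "upper_triangular T"
  shows "T = mat_diag n (\<lambda>k. complex_of_real (Re (T $$ (k, k))))"
proof (rule eq_matI)
  have herm: "cnj (T $$ (j, i)) = T $$ (i, j)" if "i < n" "j < n" for i j
    using assms that unfolding hermitian_def by (metis carrier_matD)
  fix i j assume "i < dim_row (mat_diag n (\<lambda>k. complex_of_real (Re (T $$ (k, k)))))"
    and "j < dim_col (mat_diag n (\<lambda>k. complex_of_real (Re (T $$ (k, k)))))"
  then have i: "i < n" and j: "j < n"
    by (auto simp: mat_diag_def)
  show "T $$ (i, j) = mat_diag n (\<lambda>k. complex_of_real (Re (T $$ (k, k)))) $$ (i, j)"
  proof (cases i j rule: linorder_cases)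
    case less
    then have "T $$ (j, i) = 0"
      using ut T j unfolding upper_triangular_def by auto
    then show ?thesis
      using herm[OF i j] less i j by (simp add: mat_diag_def)
  next
    case equal
    then have "Im (T $$ (i, i)) = 0"
      using herm[OF i i] by (metis cnj.simps(2) neg_equal_zero)
    then show ?thesis
      using equal i by (simp add: mat_diag_def complex_eq_iff)
  next
    case greater
    then show ?thesis
      using ut T i unfolding upper_triangular_def by (auto simp: mat_diag_def)
  qed
qed (use T in \<open>auto simp: mat_diag_def\<close>)


section \<open>Gram--Schmidt orthogonalization\<close>

text \<open>For Gram--Schmidt, a vector of \<open>\<complex>\<^sup>n\<close> is a function \<open>nat \<Rightarrow> complex\<close> of which only the
  components below \<open>n\<close> matter, and a family of vectors is indexed by its first argument;
  \<open>span_upto n f k\<close> is the span of \<open>f 0, \<dots>, f (k - 1)\<close>.\<close>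

definition cinner :: "nat \<Rightarrow> (nat \<Rightarrow> complex) \<Rightarrow> (nat \<Rightarrow> complex) \<Rightarrow> complex" where
  "cinner n x y = (\<Sum>i<n. cnj (x i) * y i)"

definition mat_vec :: "complex mat \<Rightarrow> (nat \<Rightarrow> complex) \<Rightarrow> nat \<Rightarrow> complex" where
  "mat_vec A x = (\<lambda>i. \<Sum>j<dim_col A. A $$ (i, j) * x j)"

definition span_upto :: "nat \<Rightarrow> (nat \<Rightarrow> nat \<Rightarrow> complex) \<Rightarrow> nat \<Rightarrow> (nat \<Rightarrow> complex) set" where
  "span_upto n f k = {v. \<exists>c. \<forall>i<n. v i = (\<Sum>l<k. c l * f l i)}"

lemma span_upto_member:
  assumes "l < k"
  shows "f l \<in> span_upto n f k"
proof -
  have "(\<Sum>j<k. (if j = l then 1 else 0) * f j i) = (\<Sum>j<k. if j = l then f j i else 0)" for i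
    by (rule sum.cong) auto
  then have "f l i = (\<Sum>j<k. (if j = l then 1 else 0) * f j i)" for i
    using assms by simp
  then show ?thesis
    unfolding span_upto_def by (intro CollectI exI[of _ "\<lambda>j. if j = l then 1 else 0"]) blast
qed

lemma span_upto_add:
  "v \<in> span_upto n f k \<Longrightarrow> w \<in> span_upto n f k \<Longrightarrow> (\<lambda>i. v i + w i) \<in> span_upto n f k"
  unfolding span_upto_def
  by (clarify, rename_tac c d, rule_tac x = "\<lambda>l. c l + d l" in exI) (simp add: sum.distrib distrib_right)

lemma span_upto_scale: "v \<in> span_upto n f k \<Longrightarrow> (\<lambda>i. a * v i) \<in> span_upto n f k"
  unfolding span_upto_def
  by (clarify, rename_tac c, rule_tac x = "\<lambda>l. a * c l" in exI) (simp add: sum_distrib_left mult.assoc)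

lemma span_upto_sum:
  "finite S \<Longrightarrow> (\<And>j. j \<in> S \<Longrightarrow> v j \<in> span_upto n f k) \<Longrightarrow> (\<lambda>i. \<Sum>j\<in>S. v j i) \<in> span_upto n f k"
proof (induction S rule: finite_induct)
  case empty
  show ?case
    unfolding span_upto_def by (intro CollectI exI[of _ "\<lambda>_. 0"]) simp
next
  case (insert x S)
  then show ?case
    using span_upto_add[of "v x" n f k "\<lambda>i. \<Sum>j\<in>S. v j i"] by simp
qed

lemma span_upto_cong: "v \<in> span_upto n f k \<Longrightarrow> (\<And>i. i < n \<Longrightarrow> w i = v i) \<Longrightarrow> w \<in> span_upto n f k"
  unfolding span_upto_def by auto

lemma span_upto_mono: "k \<le> k' \<Longrightarrow> v \<in> span_upto n f k \<Longrightarrow> v \<in> span_upto n f k'"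
  unfolding span_upto_def
proof clarify
  fix c assume "k \<le> k'" and v: "\<forall>i<n. v i = (\<Sum>l<k. c l * f l i)"
  then have "(\<Sum>l<k'. (if l < k then c l else 0) * f l i) = (\<Sum>l<k. c l * f l i)" for i
    by (intro sum.mono_neutral_cong_right) auto
  with v show "\<exists>c. \<forall>i<n. v i = (\<Sum>l<k'. c l * f l i)"
    by metis
qed

lemma span_upto_trans:
  assumes "v \<in> span_upto n f k" and "\<And>l. l < k \<Longrightarrow> f l \<in> span_upto n g m"
  shows "v \<in> span_upto n g m"
proof -
  obtain c where c: "\<forall>i<n. v i = (\<Sum>l<k. c l * f l i)"
    using assms(1) unfolding span_upto_def by auto
  have "(\<lambda>i. \<Sum>l<k. c l * f l i) \<in> span_upto n g m"
    by (rule span_upto_sum) (auto intro: span_upto_scale assms(2))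
  then show ?thesis
    by (rule span_upto_cong) (use c in auto)
qed

lemma cinner_span_upto_eq_0:
  assumes "v \<in> span_upto n f k" and "\<And>l. l < k \<Longrightarrow> cinner n x (f l) = 0"
  shows "cinner n x v = 0"
proof -
  obtain c where c: "\<forall>i<n. v i = (\<Sum>l<k. c l * f l i)"
    using assms(1) unfolding span_upto_def by auto
  have "cinner n x v = (\<Sum>i<n. \<Sum>l<k. c l * (cnj (x i) * f l i))"
    unfolding cinner_def using c by (simp add: sum_distrib_left mult_ac)
  also have "\<dots> = (\<Sum>l<k. c l * cinner n x (f l))"
    unfolding cinner_def by (subst sum.swap) (simp add: sum_distrib_left)
  finally show ?thesis
    using assms(2) by simp
qed

lemma mat_vec_span_upto:
  assumes "v \<in> span_upto n f k" and "dim_col A = n"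
  shows "mat_vec A v \<in> span_upto n (\<lambda>l. mat_vec A (f l)) k"
proof -
  obtain c where c: "\<forall>i<n. v i = (\<Sum>l<k. c l * f l i)"
    using assms(1) unfolding span_upto_def by auto
  have "mat_vec A v i = (\<Sum>l<k. c l * mat_vec A (f l) i)" for i
  proof -
    have "mat_vec A v i = (\<Sum>j<n. \<Sum>l<k. c l * (A $$ (i, j) * f l j))"
      unfolding mat_vec_def using c assms(2) by (simp add: sum_distrib_left mult_ac)
    also have "\<dots> = (\<Sum>l<k. c l * mat_vec A (f l) i)"
      unfolding mat_vec_def assms(2) by (subst sum.swap) (simp add: sum_distrib_left)
    finally show ?thesis .
  qed
  then show ?thesis
    unfolding span_upto_def by blast
qed

lemma cinner_swap: "cinner n y x = cnj (cinner n x y)"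
  unfolding cinner_def by (simp add: cnj_sum mult.commute)

lemma cinner_self: "cinner n x x = of_real (\<Sum>i<n. (cmod (x i))\<^sup>2)"
  unfolding cinner_def of_real_sum complex_norm_square by (simp only: mult.commute)

lemma cinner_self_eq_0:
  assumes "cinner n x x = 0" "i < n"
  shows "x i = 0"
proof -
  have "(\<Sum>i<n. (cmod (x i))\<^sup>2) = 0"
    using assms(1) by (simp only: cinner_self of_real_eq_0_iff)
  then have "(cmod (x i))\<^sup>2 = 0"
    using assms(2) by (subst (asm) sum_nonneg_eq_0_iff) auto
  then show ?thesis
    by simp
qed

lemma cinner_diff_sum:
  "cinner n x (\<lambda>i. a i - (\<Sum>l\<in>S. c l * y l i)) = cinner n x a - (\<Sum>l\<in>S. c l * cinner n x (y l))"
proof -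
  have "cinner n x (\<lambda>i. a i - (\<Sum>l\<in>S. c l * y l i))
      = cinner n x a - (\<Sum>i<n. \<Sum>l\<in>S. c l * (cnj (x i) * y l i))"
    unfolding cinner_def by (simp add: right_diff_distrib sum_subtractf sum_distrib_left mult_ac)
  also have "(\<Sum>i<n. \<Sum>l\<in>S. c l * (cnj (x i) * y l i)) = (\<Sum>l\<in>S. c l * cinner n x (y l))"
    unfolding cinner_def by (subst sum.swap) (simp add: sum_distrib_left)
  finally show ?thesis .
qed

lemma cinner_scale: "cinner n (\<lambda>i. a * x i) (\<lambda>i. b * y i) = cnj a * b * cinner n x y"
  unfolding cinner_def by (simp add: sum_distrib_left mult_ac)

lemma mat_vec_scale: "mat_vec A (\<lambda>i. a * x i) = (\<lambda>i. a * mat_vec A x i)"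
  unfolding mat_vec_def by (simp add: sum_distrib_left mult.left_commute)

fun orthogonalize :: "nat \<Rightarrow> (nat \<Rightarrow> nat \<Rightarrow> complex) \<Rightarrow> nat \<Rightarrow> nat \<Rightarrow> complex" where
  "orthogonalize n p k = (\<lambda>i. p k i -
     (\<Sum>j<k. cinner n (orthogonalize n p j) (p k) / cinner n (orthogonalize n p j) (orthogonalize n p j)
        * orthogonalize n p j i))"

declare orthogonalize.simps [simp del]

context
  fixes n :: nat and p :: "nat \<Rightarrow> nat \<Rightarrow> complex"
begin

lemma orthogonalize_minus_in_span: "(\<lambda>i. orthogonalize n p k i - p k i) \<in> span_upto n p k"
proof (induction k rule: less_induct)
  case (less k)
  let ?q = "orthogonalize n p"
  have "?q j \<in> span_upto n p k" if "j < k" for j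
  proof -
    have "(\<lambda>i. (?q j i - p j i) + p j i) \<in> span_upto n p k"
      using less[OF that] span_upto_mono[of j k] span_upto_member[OF that] that
      by (intro span_upto_add) auto
    then show ?thesis
      by simp
  qed
  then have "(\<lambda>i. -1 * (\<Sum>j<k. cinner n (?q j) (p k) / cinner n (?q j) (?q j) * ?q j i)) \<in> span_upto n p k"
    by (intro span_upto_scale span_upto_sum) auto
  then show ?case
    by (rule span_upto_cong) (simp add: orthogonalize.simps[of n p k])
qed

lemma orthogonalize_in_span: "orthogonalize n p k \<in> span_upto n p (Suc k)"
proof -
  have "(\<lambda>i. (orthogonalize n p k i - p k i) + p k i) \<in> span_upto n p (Suc k)"
    using orthogonalize_minus_in_span[of k] span_upto_mono[of k "Suc k"]
    by (intro span_upto_add span_upto_member) auto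
  then show ?thesis
    by simp
qed

lemma in_span_orthogonalize: "p k \<in> span_upto n (orthogonalize n p) (Suc k)"
proof -
  let ?q = "orthogonalize n p"
  have "(\<lambda>i. ?q k i + (\<Sum>j<k. cinner n (?q j) (p k) / cinner n (?q j) (?q j) * ?q j i)) \<in> span_upto n ?q (Suc k)"
    by (intro span_upto_add span_upto_sum span_upto_scale span_upto_member) auto
  then show ?thesis
    by (rule span_upto_cong) (simp add: orthogonalize.simps[of n p k])
qed

(* No independence is needed here: if \<open>cinner n q q = 0\<close> then \<open>q\<close> vanishes, so the junk
   quotient \<open>x / 0 = 0\<close> in the recursion does no harm. *)
lemma cinner_orthogonalize: "j < k \<Longrightarrow> cinner n (orthogonalize n p j) (orthogonalize n p k) = 0"
proof (induction k arbitrary: j rule: less_induct)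
  case (less k)
  let ?q = "orthogonalize n p"
  define c where "c l = cinner n (?q l) (p k) / cinner n (?q l) (?q l)" for l
  have orth: "cinner n (?q j) (?q l) = 0" if "l < k" "l \<noteq> j" for l
  proof (cases "j < l")
    case True
    then show ?thesis
      using less.IH[OF that(1)] by blast
  next
    case False
    then have "cinner n (?q l) (?q j) = 0"
      using less that by simp
    then show ?thesis
      by (simp add: cinner_swap[of n "?q j"])
  qed
  have "?q k = (\<lambda>i. p k i - (\<Sum>l<k. c l * ?q l i))"
    by (simp add: orthogonalize.simps[of n p k] c_def)
  then have "cinner n (?q j) (?q k) = cinner n (?q j) (p k) - (\<Sum>l<k. c l * cinner n (?q j) (?q l))"
    by (simp only: cinner_diff_sum)
  also have "(\<Sum>l<k. c l * cinner n (?q j) (?q l)) = c j * cinner n (?q j) (?q j)"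
    using less.prems orth by (subst sum.remove[of _ j]) (auto intro!: sum.neutral)
  also have "c j * cinner n (?q j) (?q j) = cinner n (?q j) (p k)"
  proof (cases "cinner n (?q j) (?q j) = 0")
    case True
    then have "cinner n (?q j) (p k) = 0"
      unfolding cinner_def using cinner_self_eq_0[OF True] by simp
    with True show ?thesis
      by simp
  qed (simp add: c_def)
  finally show ?case
    by simp
qed

lemma orthogonalize_nonzero:
  assumes "p k \<notin> span_upto n p k"
  shows "\<exists>i<n. orthogonalize n p k i \<noteq> 0"
proof (rule ccontr)
  assume "\<not> (\<exists>i<n. orthogonalize n p k i \<noteq> 0)"
  moreover have "(\<lambda>i. -1 * (orthogonalize n p k i - p k i)) \<in> span_upto n p k"
    by (rule span_upto_scale[OF orthogonalize_minus_in_span])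
  ultimately have "p k \<in> span_upto n p k"
    by (elim span_upto_cong) auto
  with assms show False ..
qed

end


section \<open>The spectral theorem for Hermitian matrices\<close>

lemma col_not_in_span_upto:
  assumes P: "P \<in> carrier_mat n n" and Q: "Q \<in> carrier_mat n n" and QP: "Q * P = 1\<^sub>m n"
    and k: "k < n"
  shows "(\<lambda>i. P $$ (i, k)) \<notin> span_upto n (\<lambda>l i. P $$ (i, l)) k"
proof
  assume "(\<lambda>i. P $$ (i, k)) \<in> span_upto n (\<lambda>l i. P $$ (i, l)) k"
  then obtain c where c: "\<forall>i<n. P $$ (i, k) = (\<Sum>l<k. c l * P $$ (i, l))"
    unfolding span_upto_def by auto
  define x where "x l = (if l < k then c l else if l = k then -1 else 0)" for l
  have Px: "(\<Sum>l<n. P $$ (i, l) * x l) = 0" if "i < n" for i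
  proof -
    have "(\<Sum>l<n. P $$ (i, l) * x l) = (\<Sum>l<Suc k. P $$ (i, l) * x l)"
      using k by (intro sum.mono_neutral_right) (auto simp: x_def)
    also have "\<dots> = (\<Sum>l<k. c l * P $$ (i, l)) - P $$ (i, k)"
      by (simp add: x_def mult.commute)
    finally show ?thesis
      using c that by simp
  qed
  have "x k = (\<Sum>l<n. (Q * P) $$ (k, l) * x l)"
    using QP k by (simp add: if_distrib[of "\<lambda>a. a * _"] sum.delta cong: if_cong)
  also have "\<dots> = (\<Sum>l<n. \<Sum>i<n. Q $$ (k, i) * (P $$ (i, l) * x l))"
    using P Q k by (simp add: scalar_prod_def atLeast0LessThan sum_distrib_right mult.assoc)
  also have "\<dots> = (\<Sum>i<n. Q $$ (k, i) * (\<Sum>l<n. P $$ (i, l) * x l))"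
    by (subst sum.swap) (simp add: sum_distrib_left)
  also have "\<dots> = 0"
    using Px by simp
  finally show False
    by (simp add: x_def)
qed

lemma mat_vec_col_in_span_upto:
  assumes A: "A \<in> carrier_mat n n" and P: "P \<in> carrier_mat n n" and B: "B \<in> carrier_mat n n"
    and AP: "A * P = P * B" and B_ut: "upper_triangular B" and l: "l < n"
  shows "mat_vec A (\<lambda>i. P $$ (i, l)) \<in> span_upto n (\<lambda>m i. P $$ (i, m)) (Suc l)"
proof -
  have "mat_vec A (\<lambda>i. P $$ (i, l)) i = (\<Sum>m<Suc l. B $$ (m, l) * P $$ (i, m))" if i: "i < n" for i
  proof -
    have "mat_vec A (\<lambda>i. P $$ (i, l)) i = (A * P) $$ (i, l)"
      using A P i l by (simp add: mat_vec_def scalar_prod_def atLeast0LessThan)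
    also have "\<dots> = (P * B) $$ (i, l)"
      by (simp only: AP)
    also have "\<dots> = (\<Sum>m<n. B $$ (m, l) * P $$ (i, m))"
      using P B i l by (simp add: scalar_prod_def atLeast0LessThan mult.commute)
    also have "\<dots> = (\<Sum>m<Suc l. B $$ (m, l) * P $$ (i, m))"
    proof (rule sum.mono_neutral_right)
      show "\<forall>m\<in>{..<n} - {..<Suc l}. B $$ (m, l) * P $$ (i, m) = 0"
        using B_ut B unfolding upper_triangular_def by auto
    qed (use l in auto)
    finally show ?thesis .
  qed
  then show ?thesis
    unfolding span_upto_def by (intro CollectI exI[of _ "\<lambda>m. B $$ (m, l)"]) blast
qed

lemma mat_vec_orthogonalize_in_span_upto:
  assumes A: "A \<in> carrier_mat n n" and P: "P \<in> carrier_mat n n" and B: "B \<in> carrier_mat n n"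
    and AP: "A * P = P * B" and B_ut: "upper_triangular B" and k: "k < n"
  defines "p \<equiv> \<lambda>l i. P $$ (i, l)"
  shows "mat_vec A (orthogonalize n p k) \<in> span_upto n (orthogonalize n p) (Suc k)"
proof -
  have "mat_vec A (orthogonalize n p k) \<in> span_upto n (\<lambda>l. mat_vec A (p l)) (Suc k)"
    using A by (intro mat_vec_span_upto orthogonalize_in_span) simp
  then have "mat_vec A (orthogonalize n p k) \<in> span_upto n p (Suc k)"
  proof (rule span_upto_trans)
    fix l assume "l < Suc k"
    then show "mat_vec A (p l) \<in> span_upto n p (Suc k)"
      using mat_vec_col_in_span_upto[OF A P B AP B_ut, of l] k span_upto_mono[of "Suc l" "Suc k"]
      unfolding p_def by auto
  qed
  then show ?thesis
  proof (rule span_upto_trans)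
    fix l assume "l < Suc k"
    then show "p l \<in> span_upto n (orthogonalize n p) (Suc k)"
      using in_span_orthogonalize[where n = n and p = p and k = l] span_upto_mono[of "Suc l" "Suc k"] by auto
  qed
qed

lemma adjoint_mult_mult_index:
  assumes "U \<in> carrier_mat n n" "A \<in> carrier_mat n n" "j < n" "k < n"
  shows "(mat_adjoint U * A * U) $$ (j, k) = cinner n (\<lambda>i. U $$ (i, j)) (mat_vec A (\<lambda>i. U $$ (i, k)))"
proof -
  have "(mat_adjoint U * A * U) $$ (j, k) = (\<Sum>m<n. \<Sum>i<n. cnj (U $$ (i, j)) * (A $$ (i, m) * U $$ (m, k)))"
    using assms by (simp add: scalar_prod_def atLeast0LessThan sum_distrib_right mult.assoc)
  also have "\<dots> = cinner n (\<lambda>i. U $$ (i, j)) (mat_vec A (\<lambda>i. U $$ (i, k)))"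
    using assms unfolding cinner_def mat_vec_def by (subst sum.swap) (simp add: sum_distrib_left)
  finally show ?thesis .
qed

lemma unitary_normalize_orthogonal:
  fixes q :: "nat \<Rightarrow> nat \<Rightarrow> complex"
  assumes orth: "\<And>j k. j < k \<Longrightarrow> k < n \<Longrightarrow> cinner n (q j) (q k) = 0"
    and nonzero: "\<And>k. k < n \<Longrightarrow> \<exists>i<n. q k i \<noteq> 0"
  defines "r \<equiv> \<lambda>k. complex_of_real (1 / sqrt (Re (cinner n (q k) (q k))))"
  shows "unitary n (mat n n (\<lambda>(i, k). r k * q k i))"
proof (rule unitaryI)
  fix j k assume j: "j < n" and k: "k < n"
  have "(\<Sum>i<n. cnj (mat n n (\<lambda>(i, k). r k * q k i) $$ (i, j)) * mat n n (\<lambda>(i, k). r k * q k i) $$ (i, k))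
      = cinner n (\<lambda>i. r j * q j i) (\<lambda>i. r k * q k i)"
    unfolding cinner_def using j k by (intro sum.cong) auto
  also have "\<dots> = cnj (r j) * r k * cinner n (q j) (q k)"
    by (rule cinner_scale)
  also have "\<dots> = (if j = k then 1 else 0)"
  proof (cases "j = k")
    case True
    define N where "N = (\<Sum>i<n. (cmod (q k i))\<^sup>2)"
    obtain i where "i < n" "q k i \<noteq> 0"
      using nonzero[OF k] by blast
    then have "0 < (cmod (q k i))\<^sup>2" by simp
    also have "\<dots> \<le> N"
      unfolding N_def using \<open>i < n\<close> by (intro member_le_sum) auto
    finally have "N > 0" .
    moreover have "cinner n (q k) (q k) = of_real N"
      unfolding N_def by (rule cinner_self)
    ultimately show ?thesis
      using True by (simp add: r_def flip: of_real_mult)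
  next
    case False
    then have "cinner n (q j) (q k) = 0"
      using orth[of j k] orth[of k j] j k cinner_swap[of n "q j" "q k"] by (cases "j < k") auto
    with False show ?thesis
      by simp
  qed
  finally show "(\<Sum>i<n. cnj (mat n n (\<lambda>(i, k). r k * q k i) $$ (i, j)) * mat n n (\<lambda>(i, k). r k * q k i) $$ (i, k))
      = (if j = k then 1 else 0)" .
qed simp

definition orthonormalize_cols :: "nat \<Rightarrow> complex mat \<Rightarrow> complex mat" where
  "orthonormalize_cols n P = (let q = orthogonalize n (\<lambda>l i. P $$ (i, l))
     in mat n n (\<lambda>(i, k). complex_of_real (1 / sqrt (Re (cinner n (q k) (q k)))) * q k i))"

lemma orthonormalize_cols_carrier [simp]: "orthonormalize_cols n P \<in> carrier_mat n n"
  unfolding orthonormalize_cols_def Let_def by simp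

lemma unitary_orthonormalize_cols:
  assumes P: "P \<in> carrier_mat n n" and Q: "Q \<in> carrier_mat n n" and QP: "Q * P = 1\<^sub>m n"
  shows "unitary n (orthonormalize_cols n P)"
  unfolding orthonormalize_cols_def Let_def
proof (rule unitary_normalize_orthogonal)
  let ?q = "orthogonalize n (\<lambda>l i. P $$ (i, l))"
  show "cinner n (?q j) (?q k) = 0" if "j < k" for j k
    using that by (rule cinner_orthogonalize)
  show "\<exists>i<n. ?q k i \<noteq> 0" if "k < n" for k
    using col_not_in_span_upto[OF P Q QP that] by (intro orthogonalize_nonzero) simp
qed

lemma upper_triangular_orthonormalize_cols:
  assumes A: "A \<in> carrier_mat n n" and P: "P \<in> carrier_mat n n" and B: "B \<in> carrier_mat n n"
    and AP: "A * P = P * B" and B_ut: "upper_triangular B"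
  shows "upper_triangular (mat_adjoint (orthonormalize_cols n P) * A * orthonormalize_cols n P)"
proof -
  define q where "q = orthogonalize n (\<lambda>l i. P $$ (i, l))"
  define r where "r k = complex_of_real (1 / sqrt (Re (cinner n (q k) (q k))))" for k
  define U where "U = orthonormalize_cols n P"
  have U_index: "U $$ (i, k) = r k * q k i" if "i < n" "k < n" for i k
    using that by (simp add: U_def orthonormalize_cols_def Let_def q_def r_def)
  have "(mat_adjoint U * A * U) $$ (j, k) = 0" if "k < j" "j < n" for j k
  proof -
    have "(mat_adjoint U * A * U) $$ (j, k) = cinner n (\<lambda>i. U $$ (i, j)) (mat_vec A (\<lambda>i. U $$ (i, k)))"
      using A that by (intro adjoint_mult_mult_index) (auto simp: U_def)
    also have "\<dots> = cinner n (\<lambda>i. r j * q j i) (mat_vec A (\<lambda>i. r k * q k i))"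
      using A that unfolding cinner_def mat_vec_def by (simp add: U_index)
    also have "\<dots> = cnj (r j) * r k * cinner n (q j) (mat_vec A (q k))"
      by (simp add: mat_vec_scale cinner_scale)
    also have "cinner n (q j) (mat_vec A (q k)) = 0"
    proof (rule cinner_span_upto_eq_0)
      show "mat_vec A (q k) \<in> span_upto n q (Suc k)"
        unfolding q_def using that by (intro mat_vec_orthogonalize_in_span_upto[OF A P B AP B_ut]) simp
      show "cinner n (q j) (q l) = 0" if "l < Suc k" for l
        using cinner_orthogonalize[of l j n "\<lambda>l i. P $$ (i, l)"] cinner_swap[of n "q j" "q l"] that \<open>k < j\<close>
        unfolding q_def by simp
    qed
    finally show ?thesis
      by simp
  qed
  then show ?thesis
    using A unfolding upper_triangular_def U_def by (auto simp: orthonormalize_cols_def Let_def)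
qed

theorem unitary_triangularization:
  assumes A: "A \<in> carrier_mat n n"
  obtains U where "unitary n U" and "upper_triangular (mat_adjoint U * A * U)"
proof -
  obtain es where "char_poly A = (\<Prod>e\<leftarrow>es. [:-e, 1:])"
    using char_poly_factorized[OF A] by blast
  moreover obtain B P Q where "schur_decomposition A es = (B, P, Q)"
    by (cases "schur_decomposition A es") auto
  ultimately have "similar_mat_wit A B P Q" and B_ut: "upper_triangular B"
    using schur_decomposition[OF A] by blast+
  then have P: "P \<in> carrier_mat n n" and Q: "Q \<in> carrier_mat n n" and B: "B \<in> carrier_mat n n"
    and QP: "Q * P = 1\<^sub>m n" and A_eq: "A = P * B * Q"
    using A unfolding similar_mat_wit_def Let_def by auto
  have "A * P = P * B * (Q * P)"
    using P B Q by (simp add: A_eq assoc_mult_mat[of _ n n _ n _ n])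
  then have "A * P = P * B"
    using QP P B by simp
  then show ?thesis
    using that unitary_orthonormalize_cols[OF P Q QP] upper_triangular_orthonormalize_cols[OF A P B _ B_ut]
    by blast
qed

lemma sort_map_permutes:
  obtains p where "p permutes {..<n}" and "\<And>k. k < n \<Longrightarrow> sort (map d [0..<n]) ! k = d (p k)"
proof -
  have "mset (sort (map d [0..<n])) = mset (map d [0..<n])"
    by simp
  then obtain p where p: "p permutes {..<length (map d [0..<n])}"
    and sorted: "permute_list p (map d [0..<n]) = sort (map d [0..<n])"
    by (rule mset_eq_permutation)
  have "sort (map d [0..<n]) ! k = d (p k)" if "k < n" for k
  proof -
    have "p k < n"
      using permutes_in_image[OF p] that by simp
    then show ?thesis
      using that p by (simp flip: sorted add: permute_list_nth)
  qed
  with p show ?thesis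
    using that by simp
qed

lemma unitary_diag_conj_permute:
  assumes V: "unitary n V" and p: "p permutes {..<n}"
  defines "U \<equiv> mat n n (\<lambda>(i, k). V $$ (i, p k))"
  shows "unitary n U"
    and "U * mat_diag n (\<lambda>k. d (p k)) * mat_adjoint U = V * mat_diag n d * mat_adjoint V"
proof -
  have pn: "p k < n" if "k < n" for k
    using permutes_in_image[OF p] that by simp
  have reindex: "(\<Sum>k<n. f (p k)) = (\<Sum>k<n. f k)" for f :: "nat \<Rightarrow> complex"
    using sum.permute[OF p, of f] by (simp add: comp_def)
  show "unitary n U"
  proof (rule unitaryI)
    fix i j assume i: "i < n" and j: "j < n"
    have "(\<Sum>k<n. cnj (U $$ (k, i)) * U $$ (k, j)) = (\<Sum>k<n. cnj (V $$ (k, p i)) * V $$ (k, p j))"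
      using i j unfolding U_def by (intro sum.cong) auto
    also have "\<dots> = (if p i = p j then 1 else 0)"
      using unitary_cols_orthonormal[OF V pn[OF i] pn[OF j]] .
    also have "(p i = p j) = (i = j)"
      using permutes_inj[OF p] by (auto dest: injD)
    finally show "(\<Sum>k<n. cnj (U $$ (k, i)) * U $$ (k, j)) = (if i = j then 1 else 0)" .
  qed (simp add: U_def)
  have carrier: "U \<in> carrier_mat n n" "V \<in> carrier_mat n n"
    using V unitary_carrier unfolding U_def by auto
  show "U * mat_diag n (\<lambda>k. d (p k)) * mat_adjoint U = V * mat_diag n d * mat_adjoint V"
  proof (rule eq_matI)
    fix i j assume "i < dim_row (V * mat_diag n d * mat_adjoint V)" "j < dim_col (V * mat_diag n d * mat_adjoint V)"
    then have i: "i < n" and j: "j < n"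
      using carrier by auto
    have "(U * mat_diag n (\<lambda>k. d (p k)) * mat_adjoint U) $$ (i, j)
        = (\<Sum>k<n. U $$ (i, k) * d (p k) * cnj (U $$ (j, k)))"
      by (rule diag_conj_index[OF carrier(1) i j])
    also have "\<dots> = (\<Sum>k<n. V $$ (i, p k) * d (p k) * cnj (V $$ (j, p k)))"
      using i j by (simp add: U_def)
    also have "\<dots> = (\<Sum>k<n. V $$ (i, k) * d k * cnj (V $$ (j, k)))"
      by (rule reindex)
    also have "\<dots> = (V * mat_diag n d * mat_adjoint V) $$ (i, j)"
      by (rule diag_conj_index[OF carrier(2) i j, symmetric])
    finally show "(U * mat_diag n (\<lambda>k. d (p k)) * mat_adjoint U) $$ (i, j) = (V * mat_diag n d * mat_adjoint V) $$ (i, j)" .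
  qed (use carrier in auto)
qed

definition is_eigenbasis :: "nat \<Rightarrow> complex mat \<Rightarrow> complex mat \<Rightarrow> bool" where
  "is_eigenbasis n U A \<longleftrightarrow>
     unitary n U \<and> A = U * mat_diag n (\<lambda>k. complex_of_real (eigvals_sorted A ! k)) * mat_adjoint U"

theorem hermitian_spectral_decomposition:
  assumes A: "A \<in> carrier_mat n n" and herm: "hermitian A"
  obtains U where "is_eigenbasis n U A"
proof -
  obtain V where V: "unitary n V" and ut: "upper_triangular (mat_adjoint V * A * V)"
    using unitary_triangularization[OF A] by blast
  have carrier: "V \<in> carrier_mat n n" "mat_adjoint V \<in> carrier_mat n n" "mat_adjoint V * A * V \<in> carrier_mat n n"
    using unitary_carrier[OF V] A by auto
  define d where "d k = Re ((mat_adjoint V * A * V) $$ (k, k))" for k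
  have T: "mat_adjoint V * A * V = mat_diag n (\<lambda>k. complex_of_real (d k))"
    unfolding d_def using carrier hermitian_adjoint_conj[OF A carrier(1) herm] ut
    by (intro hermitian_upper_triangular_eq_diag) auto
  have A_eq: "A = V * mat_diag n (\<lambda>k. complex_of_real (d k)) * mat_adjoint V"
    using unitary_conj_cancel[OF V A] by (simp add: T)
  have eig: "eigvals_sorted A = sort (map d [0..<n])"
    by (subst A_eq) (simp add: eigvals_sorted_similar[OF similar_mat_unitary_conj[OF V]] eigvals_sorted_mat_diag)
  obtain p where p: "p permutes {..<n}" and dp: "\<And>k. k < n \<Longrightarrow> sort (map d [0..<n]) ! k = d (p k)"
    using sort_map_permutes[of n d] by blast
  have "mat_diag n (\<lambda>k. complex_of_real (eigvals_sorted A ! k)) = mat_diag n (\<lambda>k. complex_of_real (d (p k)))"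
    by (auto simp: mat_diag_def eig dp intro!: eq_matI)
  with unitary_diag_conj_permute(1)[OF V p] unitary_diag_conj_permute(2)[OF V p, of "\<lambda>k. complex_of_real (d k)"]
  show ?thesis
    using A_eq that unfolding is_eigenbasis_def by metis
qed

lemma is_eigenbasis_diag_entry:
  assumes "is_eigenbasis n U R" and k: "k < n"
  shows "(mat_adjoint U * R * U) $$ (k, k) = complex_of_real (eigvals_sorted R ! k)"
proof -
  have U: "unitary n U" and R: "R = U * mat_diag n (\<lambda>k. complex_of_real (eigvals_sorted R ! k)) * mat_adjoint U"
    using assms(1) unfolding is_eigenbasis_def by blast+
  define D where "D = mat_diag n (\<lambda>k. complex_of_real (eigvals_sorted R ! k))"
  have "mat_adjoint U * R * U = mat_adjoint U * (U * D * mat_adjoint U) * U"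
    using R unfolding D_def[symmetric] by simp
  also have "\<dots> = D"
    using adjoint_conj_cancel[OF U] unfolding D_def by simp
  finally show ?thesis
    using k by (simp add: D_def mat_diag_def)
qed


section \<open>Tensor products and partial traces\<close>

lemma sum_lessThan_mult:
  fixes f :: "nat \<Rightarrow> 'a::comm_monoid_add"
  shows "(\<Sum>p<m * n. f p) = (\<Sum>p1<m. \<Sum>p2<n. f (p1 * n + p2))"
proof (induction m)
  case (Suc m)
  have "(\<Sum>p<m * n + k. f p) = (\<Sum>p<m * n. f p) + (\<Sum>p2<k. f (m * n + p2))" for k
    by (induction k) (simp_all add: add.assoc)
  from this[of n] show ?case
    using Suc by (simp add: add.commute)
qed simp

lemma mult_add_less_mult:
  fixes i k a b :: nat
  assumes "i < a" "k < b"
  shows "i * b + k < a * b"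
proof -
  have "i * b + k < Suc i * b"
    using assms(2) by simp
  also have "\<dots> \<le> a * b"
    using assms(1) by (intro mult_right_mono) auto
  finally show ?thesis .
qed

lemma kron_dim [simp]:
  "dim_row (kron A B) = dim_row A * dim_row B" "dim_col (kron A B) = dim_col A * dim_col B"
  unfolding kron_def by simp_all

lemma kron_carrier [simp]:
  "A \<in> carrier_mat a1 a2 \<Longrightarrow> B \<in> carrier_mat b1 b2 \<Longrightarrow> kron A B \<in> carrier_mat (a1 * b1) (a2 * b2)"
  by (rule carrier_matI) auto

lemma kron_index_div_mod:
  assumes "A \<in> carrier_mat a1 a2" "B \<in> carrier_mat b1 b2" "p < a1 * b1" "q < a2 * b2"
  shows "kron A B $$ (p, q) = A $$ (p div b1, q div b2) * B $$ (p mod b1, q mod b2)"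
  using assms unfolding kron_def by auto

lemma kron_mult:
  assumes A: "A \<in> carrier_mat a1 a2" and B: "B \<in> carrier_mat b1 b2"
    and C: "C \<in> carrier_mat a2 a3" and D: "D \<in> carrier_mat b2 b3"
  shows "kron A B * kron C D = kron (A * C) (B * D)"
proof (rule eq_matI)
  fix p q assume "p < dim_row (kron (A * C) (B * D))" "q < dim_col (kron (A * C) (B * D))"
  then have p: "p < a1 * b1" and q: "q < a3 * b3"
    using A B C D by auto
  then have "b1 > 0" "b3 > 0"
    by (auto intro: gr0I)
  then have pq: "p div b1 < a1" "p mod b1 < b1" "q div b3 < a3" "q mod b3 < b3"
    using p q by (auto simp: less_mult_imp_div_less)
  have "(kron A B * kron C D) $$ (p, q) = (\<Sum>r<a2 * b2. kron A B $$ (p, r) * kron C D $$ (r, q))"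
    using A B C D p q by (simp add: scalar_prod_def atLeast0LessThan)
  also have "\<dots> = (\<Sum>r1<a2. \<Sum>r2<b2. (A $$ (p div b1, r1) * C $$ (r1, q div b3))
      * (B $$ (p mod b1, r2) * D $$ (r2, q mod b3)))"
    unfolding sum_lessThan_mult using A B C D p q pq
    by (intro sum.cong refl) (simp add: kron_index_div_mod mult_add_less_mult mult_ac)
  also have "\<dots> = (A * C) $$ (p div b1, q div b3) * (B * D) $$ (p mod b1, q mod b3)"
    using A B C D pq by (simp add: scalar_prod_def atLeast0LessThan sum_product)
  also have "\<dots> = kron (A * C) (B * D) $$ (p, q)"
    by (rule kron_index_div_mod[symmetric]) (use A B C D p q in auto)
  finally show "(kron A B * kron C D) $$ (p, q) = kron (A * C) (B * D) $$ (p, q)" .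
qed (use A B C D in auto)

lemma kron_add_left:
  assumes "A \<in> carrier_mat a1 a2" "B \<in> carrier_mat a1 a2"
  shows "kron (A + B) C = kron A C + kron B C"
proof (rule eq_matI)
  fix p q assume "p < dim_row (kron A C + kron B C)" "q < dim_col (kron A C + kron B C)"
  with assms show "kron (A + B) C $$ (p, q) = (kron A C + kron B C) $$ (p, q)"
    by (auto simp: kron_def less_mult_imp_div_less distrib_right)
qed (use assms in auto)

lemma kron_add_right:
  assumes "A \<in> carrier_mat b1 b2" "B \<in> carrier_mat b1 b2"
  shows "kron C (A + B) = kron C A + kron C B"
proof (rule eq_matI)
  fix p q assume pq: "p < dim_row (kron C A + kron C B)" "q < dim_col (kron C A + kron C B)"
  then have "b1 > 0" "b2 > 0"
    using assms by (auto intro: gr0I)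
  with assms pq show "kron C (A + B) $$ (p, q) = (kron C A + kron C B) $$ (p, q)"
    by (auto simp: kron_def distrib_left)
qed (use assms in auto)

lemma kron_smult_left: "kron (c \<cdot>\<^sub>m A) B = c \<cdot>\<^sub>m kron A B"
  by (rule eq_matI) (auto simp: kron_def less_mult_imp_div_less mult.assoc)

lemma kron_smult_right: "kron A (c \<cdot>\<^sub>m B) = c \<cdot>\<^sub>m kron A B"
proof (rule eq_matI)
  fix p q assume pq: "p < dim_row (c \<cdot>\<^sub>m kron A B)" "q < dim_col (c \<cdot>\<^sub>m kron A B)"
  then have "dim_row B > 0" "dim_col B > 0"
    by (auto intro: gr0I)
  with pq show "kron A (c \<cdot>\<^sub>m B) $$ (p, q) = (c \<cdot>\<^sub>m kron A B) $$ (p, q)"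
    by (auto simp: kron_def mult.left_commute)
qed auto

lemma kron_mat_diag: "kron (mat_diag m f) (mat_diag n g) = mat_diag (m * n) (\<lambda>p. f (p div n) * g (p mod n))"
proof (rule eq_matI)
  fix p q assume "p < dim_row (mat_diag (m * n) (\<lambda>p. f (p div n) * g (p mod n)))"
    "q < dim_col (mat_diag (m * n) (\<lambda>p. f (p div n) * g (p mod n)))"
  then have p: "p < m * n" and q: "q < m * n"
    by (simp_all add: mat_diag_def)
  then have "n > 0"
    by (auto intro: gr0I)
  moreover have "(p div n = q div n \<and> p mod n = q mod n) = (p = q)"
    by (metis div_mult_mod_eq)
  ultimately show "kron (mat_diag m f) (mat_diag n g) $$ (p, q) = mat_diag (m * n) (\<lambda>p. f (p div n) * g (p mod n)) $$ (p, q)"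
    using p q by (auto simp: kron_def mat_diag_def less_mult_imp_div_less)
qed (simp_all add: kron_def mat_diag_def)

lemma kron_one: "kron (1\<^sub>m a) (1\<^sub>m b) = 1\<^sub>m (a * b)"
  using kron_mat_diag[of a "\<lambda>_. 1" b "\<lambda>_. 1"] by simp

lemma mat_adjoint_kron: "mat_adjoint (kron A B) = kron (mat_adjoint A) (mat_adjoint B)"
proof (rule eq_matI)
  fix p q assume "p < dim_row (kron (mat_adjoint A) (mat_adjoint B))"
    "q < dim_col (kron (mat_adjoint A) (mat_adjoint B))"
  then have p: "p < dim_col A * dim_col B" and q: "q < dim_row A * dim_row B"
    by auto
  then have "dim_col B > 0" "dim_row B > 0"
    by (auto intro: gr0I)
  then show "mat_adjoint (kron A B) $$ (p, q) = kron (mat_adjoint A) (mat_adjoint B) $$ (p, q)"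
    using p q by (simp add: kron_def less_mult_imp_div_less)
qed auto

lemma unitary_kron:
  assumes U: "unitary m U" and V: "unitary n V"
  shows "unitary (m * n) (kron U V)"
proof -
  have "mat_adjoint (kron U V) * kron U V = kron (mat_adjoint U * U) (mat_adjoint V * V)"
    using unitary_carrier[OF U] unitary_carrier[OF V]
    by (simp add: mat_adjoint_kron kron_mult[of _ m m _ n n _ m _ n])
  then show ?thesis
    using U V unfolding unitary_def by (simp add: kron_one)
qed

text \<open>\<open>ptrace_right m n\<close> and \<open>ptrace_left m n\<close> trace out the second and the first factor of
  \<open>\<complex>\<^sup>m \<otimes> \<complex>\<^sup>n\<close>; as in \<^const>\<open>kron\<close>, index \<open>p\<close> of the product stands for \<open>(p div n, p mod n)\<close>.\<close>

definition ptrace_right :: "nat \<Rightarrow> nat \<Rightarrow> complex mat \<Rightarrow> complex mat" where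
  "ptrace_right m n \<sigma> = mat m m (\<lambda>(i, j). \<Sum>k<n. \<sigma> $$ (i * n + k, j * n + k))"

definition ptrace_left :: "nat \<Rightarrow> nat \<Rightarrow> complex mat \<Rightarrow> complex mat" where
  "ptrace_left m n \<sigma> = mat n n (\<lambda>(i, j). \<Sum>k<m. \<sigma> $$ (k * n + i, k * n + j))"

lemma ptrace_left_carrier [simp]: "ptrace_left m n \<sigma> \<in> carrier_mat n n"
  unfolding ptrace_left_def by simp

lemma ptrace_right_conj_kron:
  assumes X: "X \<in> carrier_mat m m" and Y: "unitary n Y" and \<sigma>: "\<sigma> \<in> carrier_mat (m * n) (m * n)"
  shows "ptrace_right m n (mat_adjoint (kron X Y) * \<sigma> * kron X Y) = mat_adjoint X * ptrace_right m n \<sigma> * X"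
proof (rule eq_matI)
  have Y': "Y \<in> carrier_mat n n"
    using Y by (rule unitary_carrier)
  have K: "kron X Y \<in> carrier_mat (m * n) (m * n)"
    using X Y' by simp
  fix i j assume "i < dim_row (mat_adjoint X * ptrace_right m n \<sigma> * X)"
    "j < dim_col (mat_adjoint X * ptrace_right m n \<sigma> * X)"
  then have i: "i < m" and j: "j < m"
    using X by auto
  have mod_n: "p mod n < n" if "p < m * n" for p
    using that by (cases "n = 0") auto
  have XY: "kron X Y $$ (p, l * n + k) = X $$ (p div n, l) * Y $$ (p mod n, k)"
    if "p < m * n" "l < m" "k < n" for p l k
    using kron_index_div_mod[OF X Y' that(1) mult_add_less_mult[OF that(2,3)]] that(3) by simp
  have "ptrace_right m n (mat_adjoint (kron X Y) * \<sigma> * kron X Y) $$ (i, j)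
      = (\<Sum>k<n. \<Sum>p<m * n. \<Sum>q<m * n. cnj (X $$ (p div n, i)) * \<sigma> $$ (p, q) * X $$ (q div n, j)
          * (cnj (Y $$ (p mod n, k)) * Y $$ (q mod n, k)))"
    using i j K \<sigma> by (simp add: ptrace_right_def adjoint_sandwich_index mult_add_less_mult XY mult_ac)
  also have "\<dots> = (\<Sum>p<m * n. \<Sum>q<m * n. cnj (X $$ (p div n, i)) * \<sigma> $$ (p, q) * X $$ (q div n, j)
      * (\<Sum>k<n. Y $$ (q mod n, k) * cnj (Y $$ (p mod n, k))))"
    by (subst sum.swap, rule sum.cong[OF refl], subst sum.swap) (simp add: sum_distrib_left sum_distrib_right mult_ac)
  also have "\<dots> = (\<Sum>p<m * n. \<Sum>q<m * n. if q mod n = p mod n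
      then cnj (X $$ (p div n, i)) * \<sigma> $$ (p, q) * X $$ (q div n, j) else 0)"
    using unitary_rows_orthonormal[OF Y] mod_n by (intro sum.cong refl) auto
  also have "\<dots> = (\<Sum>p1<m. \<Sum>p2<n. \<Sum>q1<m. cnj (X $$ (p1, i)) * \<sigma> $$ (p1 * n + p2, q1 * n + p2) * X $$ (q1, j))"
    unfolding sum_lessThan_mult by (intro sum.cong refl) (simp add: if_distrib sum.delta cong: if_cong)
  also have "\<dots> = (\<Sum>p1<m. \<Sum>q1<m. cnj (X $$ (p1, i)) * ptrace_right m n \<sigma> $$ (p1, q1) * X $$ (q1, j))"
    by (rule sum.cong[OF refl], subst sum.swap) (simp add: ptrace_right_def sum_distrib_left sum_distrib_right)
  also have "\<dots> = (mat_adjoint X * ptrace_right m n \<sigma> * X) $$ (i, j)"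
    by (rule adjoint_sandwich_index[symmetric]) (use X i j in \<open>auto simp: ptrace_right_def\<close>)
  finally show "ptrace_right m n (mat_adjoint (kron X Y) * \<sigma> * kron X Y) $$ (i, j)
      = (mat_adjoint X * ptrace_right m n \<sigma> * X) $$ (i, j)" .
qed (use X in \<open>auto simp: ptrace_right_def\<close>)

lemma ptrace_left_conj_kron:
  assumes X: "unitary m X" and Y: "Y \<in> carrier_mat n n" and \<sigma>: "\<sigma> \<in> carrier_mat (m * n) (m * n)"
  shows "ptrace_left m n (mat_adjoint (kron X Y) * \<sigma> * kron X Y) = mat_adjoint Y * ptrace_left m n \<sigma> * Y"
proof (rule eq_matI)
  have X': "X \<in> carrier_mat m m"
    using X by (rule unitary_carrier)
  have K: "kron X Y \<in> carrier_mat (m * n) (m * n)"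
    using X' Y by simp
  fix i j assume "i < dim_row (mat_adjoint Y * ptrace_left m n \<sigma> * Y)"
    "j < dim_col (mat_adjoint Y * ptrace_left m n \<sigma> * Y)"
  then have i: "i < n" and j: "j < n"
    using Y by auto
  have div_m: "p div n < m" if "p < m * n" for p
    using that by (simp add: less_mult_imp_div_less)
  have XY: "kron X Y $$ (p, k * n + l) = X $$ (p div n, k) * Y $$ (p mod n, l)"
    if "p < m * n" "k < m" "l < n" for p k l
    using kron_index_div_mod[OF X' Y that(1) mult_add_less_mult[OF that(2,3)]] that(3) by simp
  have "ptrace_left m n (mat_adjoint (kron X Y) * \<sigma> * kron X Y) $$ (i, j)
      = (\<Sum>k<m. \<Sum>p<m * n. \<Sum>q<m * n. cnj (Y $$ (p mod n, i)) * \<sigma> $$ (p, q) * Y $$ (q mod n, j)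
          * (cnj (X $$ (p div n, k)) * X $$ (q div n, k)))"
    using i j K \<sigma> by (simp add: ptrace_left_def adjoint_sandwich_index mult_add_less_mult XY mult_ac)
  also have "\<dots> = (\<Sum>p<m * n. \<Sum>q<m * n. cnj (Y $$ (p mod n, i)) * \<sigma> $$ (p, q) * Y $$ (q mod n, j)
      * (\<Sum>k<m. X $$ (q div n, k) * cnj (X $$ (p div n, k))))"
    by (subst sum.swap, rule sum.cong[OF refl], subst sum.swap) (simp add: sum_distrib_left sum_distrib_right mult_ac)
  also have "\<dots> = (\<Sum>p<m * n. \<Sum>q<m * n. if q div n = p div n
      then cnj (Y $$ (p mod n, i)) * \<sigma> $$ (p, q) * Y $$ (q mod n, j) else 0)"
    using unitary_rows_orthonormal[OF X] div_m by (intro sum.cong refl) auto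
  also have "\<dots> = (\<Sum>p1<m. \<Sum>p2<n. \<Sum>q2<n. cnj (Y $$ (p2, i)) * \<sigma> $$ (p1 * n + p2, p1 * n + q2) * Y $$ (q2, j))"
    unfolding sum_lessThan_mult
    by (rule sum.cong[OF refl], rule sum.cong[OF refl], subst sum.swap) (simp add: sum.delta)
  also have "\<dots> = (\<Sum>p2<n. \<Sum>q2<n. cnj (Y $$ (p2, i)) * ptrace_left m n \<sigma> $$ (p2, q2) * Y $$ (q2, j))"
    by (subst sum.swap, rule sum.cong[OF refl], subst sum.swap)
      (simp add: ptrace_left_def sum_distrib_left sum_distrib_right)
  also have "\<dots> = (mat_adjoint Y * ptrace_left m n \<sigma> * Y) $$ (i, j)"
    by (rule adjoint_sandwich_index[symmetric]) (use Y i j in \<open>auto simp: ptrace_left_def\<close>)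
  finally show "ptrace_left m n (mat_adjoint (kron X Y) * \<sigma> * kron X Y) $$ (i, j)
      = (mat_adjoint Y * ptrace_left m n \<sigma> * Y) $$ (i, j)" .
qed (use Y in \<open>auto simp: ptrace_left_def\<close>)

lemma hermitian_ptrace_right:
  assumes "\<sigma> \<in> carrier_mat (m * n) (m * n)" and "hermitian \<sigma>"
  shows "hermitian (ptrace_right m n \<sigma>)"
proof -
  have "cnj (\<sigma> $$ (q, p)) = \<sigma> $$ (p, q)" if "p < m * n" "q < m * n" for p q
    using assms that unfolding hermitian_def by (metis carrier_matD)
  then show ?thesis
    unfolding hermitian_def ptrace_right_def
    by (auto simp: cnj_sum mult_add_less_mult intro!: sum.cong)
qed

lemma hermitian_ptrace_left:
  assumes "\<sigma> \<in> carrier_mat (m * n) (m * n)" and "hermitian \<sigma>"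
  shows "hermitian (ptrace_left m n \<sigma>)"
proof -
  have "cnj (\<sigma> $$ (q, p)) = \<sigma> $$ (p, q)" if "p < m * n" "q < m * n" for p q
    using assms that unfolding hermitian_def by (metis carrier_matD)
  then show ?thesis
    unfolding hermitian_def ptrace_left_def
    by (auto simp: cnj_sum mult_add_less_mult intro!: sum.cong)
qed


lemma red_carrier [simp]:
  "red_A \<rho> \<in> carrier_mat 2 2" "red_B \<rho> \<in> carrier_mat 2 2" "red_C \<rho> \<in> carrier_mat 2 2"
  unfolding red_A_def red_B_def red_C_def by simp_all

lemma red_A_eq_ptrace: "red_A \<rho> = ptrace_right 2 4 \<rho>"
  by (rule eq_matI) (simp_all add: red_A_def ptrace_right_def eval_nat_numeral lessThan_Suc add_ac)

lemma red_B_eq_ptrace: "red_B \<rho> = ptrace_right 2 2 (ptrace_left 2 4 \<rho>)"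
  by (rule eq_matI) (simp_all add: red_B_def ptrace_right_def ptrace_left_def eval_nat_numeral lessThan_Suc add_ac)

lemma red_C_eq_ptrace: "red_C \<rho> = ptrace_left 2 2 (ptrace_left 2 4 \<rho>)"
  by (rule eq_matI) (simp_all add: red_C_def ptrace_left_def eval_nat_numeral lessThan_Suc add_ac)

lemma reduced_states_hermitian:
  assumes "\<rho> \<in> carrier_mat 8 8" and "hermitian \<rho>"
  shows "hermitian (red_A \<rho>)" and "hermitian (red_B \<rho>)" and "hermitian (red_C \<rho>)"
proof -
  have \<rho>: "\<rho> \<in> carrier_mat (2 * 4) (2 * 4)"
    using assms(1) by simp
  have left: "hermitian (ptrace_left 2 4 \<rho>)"
    using \<rho> assms(2) by (rule hermitian_ptrace_left)
  show "hermitian (red_A \<rho>)"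
    unfolding red_A_eq_ptrace using \<rho> assms(2) by (rule hermitian_ptrace_right)
  show "hermitian (red_B \<rho>)"
    unfolding red_B_eq_ptrace by (rule hermitian_ptrace_right[OF _ left]) simp
  show "hermitian (red_C \<rho>)"
    unfolding red_C_eq_ptrace by (rule hermitian_ptrace_left[OF _ left]) simp
qed

lemma reduced_states_conj_local_unitary:
  assumes UA: "unitary 2 UA" and UB: "unitary 2 UB" and UC: "unitary 2 UC"
    and \<rho>: "\<rho> \<in> carrier_mat 8 8"
  defines "V \<equiv> kron UA (kron UB UC)"
  shows "red_A (mat_adjoint V * \<rho> * V) = mat_adjoint UA * red_A \<rho> * UA"
    and "red_B (mat_adjoint V * \<rho> * V) = mat_adjoint UB * red_B \<rho> * UB"
    and "red_C (mat_adjoint V * \<rho> * V) = mat_adjoint UC * red_C \<rho> * UC"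
proof -
  have \<rho>': "\<rho> \<in> carrier_mat (2 * 4) (2 * 4)"
    using \<rho> by simp
  have UBC: "unitary (2 * 2) (kron UB UC)"
    using UB UC by (rule unitary_kron)
  then have UBC': "unitary 4 (kron UB UC)" "kron UB UC \<in> carrier_mat 4 4"
    using unitary_carrier[OF UBC] by simp_all
  have left: "ptrace_left 2 4 (mat_adjoint V * \<rho> * V)
      = mat_adjoint (kron UB UC) * ptrace_left 2 4 \<rho> * kron UB UC"
    unfolding V_def using UA UBC'(2) \<rho>' by (rule ptrace_left_conj_kron)
  have \<tau>: "ptrace_left 2 4 \<rho> \<in> carrier_mat (2 * 2) (2 * 2)"
    by simp
  show "red_A (mat_adjoint V * \<rho> * V) = mat_adjoint UA * red_A \<rho> * UA"
    unfolding red_A_eq_ptrace V_def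
    using unitary_carrier[OF UA] UBC'(1) \<rho>' by (rule ptrace_right_conj_kron)
  show "red_B (mat_adjoint V * \<rho> * V) = mat_adjoint UB * red_B \<rho> * UB"
    unfolding red_B_eq_ptrace left
    using unitary_carrier[OF UB] UC \<tau> by (rule ptrace_right_conj_kron)
  show "red_C (mat_adjoint V * \<rho> * V) = mat_adjoint UC * red_C \<rho> * UC"
    unfolding red_C_eq_ptrace left
    using UB unitary_carrier[OF UC] \<tau> by (rule ptrace_left_conj_kron)
qed


section \<open>A rearrangement inequality for doubly stochastic matrices\<close>

lemma sum_mult_le_sum_top:
  fixes c r :: "nat \<Rightarrow> real"
  assumes c_mono: "\<And>i j. i \<le> j \<Longrightarrow> j < n \<Longrightarrow> c i \<le> c j"
    and r: "\<And>i. i < n \<Longrightarrow> 0 \<le> r i \<and> r i \<le> 1"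
    and r_sum: "(\<Sum>i<n. r i) = real (n - m)" and "m \<le> n"
  shows "(\<Sum>i<n. c i * r i) \<le> (\<Sum>i\<in>{m..<n}. c i)"
proof (cases "m = n")
  case True
  then have "\<forall>i\<in>{..<n}. r i = 0"
    using r r_sum by (subst sum_nonneg_eq_0_iff[symmetric]) auto
  with True show ?thesis
    by simp
next
  case False
  with \<open>m \<le> n\<close> have "m < n"
    by simp
  define ind where "ind i = (if m \<le> i then 1 else 0 :: real)" for i
  have ind_sum: "(\<Sum>i<n. f i * ind i) = (\<Sum>i\<in>{m..<n}. f i)" for f :: "nat \<Rightarrow> real"
    by (rule sum.mono_neutral_cong_right) (auto simp: ind_def)
  have "(\<Sum>i<n. c i * r i) - (\<Sum>i\<in>{m..<n}. c i)
      = (\<Sum>i<n. (c i - c m) * (r i - ind i)) + c m * ((\<Sum>i<n. r i) - (\<Sum>i<n. 1 * ind i))"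
    using ind_sum[of c] by (simp add: algebra_simps sum_subtractf sum_distrib_left sum.distrib)
  also have "(\<Sum>i<n. 1 * ind i) = real (n - m)"
    by (subst ind_sum) simp
  also have "(\<Sum>i<n. (c i - c m) * (r i - ind i)) \<le> 0"
  proof (rule sum_nonpos)
    fix i assume "i \<in> {..<n}"
    then show "(c i - c m) * (r i - ind i) \<le> 0"
      using c_mono[of i m] c_mono[of m i] r[of i] \<open>m < n\<close>
      by (cases "m \<le> i") (auto simp: ind_def mult_nonpos_nonneg mult_nonneg_nonpos)
  qed
  finally show ?thesis
    using r_sum by simp
qed

lemma sum_mult_le_of_tails:
  fixes l d :: "nat \<Rightarrow> real"
  assumes l_mono: "\<And>i j. i \<le> j \<Longrightarrow> j < n \<Longrightarrow> l i \<le> l j"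
    and tails: "\<And>m. m \<le> n \<Longrightarrow> (\<Sum>j\<in>{m..<n}. d j) \<le> 0"
    and total: "(\<Sum>j<n. d j) = 0"
  shows "(\<Sum>j<n. l j * d j) \<le> 0"
proof -
  have "(\<Sum>j\<in>{m..<n}. l j * d j) \<le> l m * (\<Sum>j\<in>{m..<n}. d j)" if "m \<le> n" for m
    using that
  proof (induction m rule: inc_induct)
    case (step m)
    have "(\<Sum>j\<in>{m..<n}. l j * d j) = l m * d m + (\<Sum>j\<in>{Suc m..<n}. l j * d j)"
      using step.hyps by (simp add: sum.atLeast_Suc_lessThan)
    also have "\<dots> \<le> l m * d m + l (Suc m) * (\<Sum>j\<in>{Suc m..<n}. d j)"
      using step.IH by simp
    also have "l (Suc m) * (\<Sum>j\<in>{Suc m..<n}. d j) \<le> l m * (\<Sum>j\<in>{Suc m..<n}. d j)"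
    proof (cases "Suc m < n")
      case True
      then show ?thesis
        using l_mono[of m "Suc m"] tails[of "Suc m"] by (intro mult_right_mono_neg) auto
    qed (use step.hyps in simp)
    also have "l m * d m + l m * (\<Sum>j\<in>{Suc m..<n}. d j) = l m * (\<Sum>j\<in>{m..<n}. d j)"
      using step.hyps by (simp add: sum.atLeast_Suc_lessThan distrib_left)
    finally show ?case
      by simp
  qed simp
  from this[of 0] show ?thesis
    using total by (simp add: atLeast0LessThan)
qed

lemma doubly_stochastic_rearrangement:
  fixes P :: "nat \<Rightarrow> nat \<Rightarrow> real" and c l :: "nat \<Rightarrow> real"
  assumes P_nonneg: "\<And>i j. i < n \<Longrightarrow> j < n \<Longrightarrow> 0 \<le> P i j"
    and rows: "\<And>i. i < n \<Longrightarrow> (\<Sum>j<n. P i j) = 1"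
    and cols: "\<And>j. j < n \<Longrightarrow> (\<Sum>i<n. P i j) = 1"
    and c_mono: "\<And>i j. i \<le> j \<Longrightarrow> j < n \<Longrightarrow> c i \<le> c j"
    and l_mono: "\<And>i j. i \<le> j \<Longrightarrow> j < n \<Longrightarrow> l i \<le> l j"
  shows "(\<Sum>i<n. \<Sum>j<n. c i * P i j * l j) \<le> (\<Sum>j<n. c j * l j)"
proof -
  define d where "d j = (\<Sum>i<n. c i * P i j) - c j" for j
  have "(\<Sum>j<n. l j * d j) \<le> 0"
  proof (rule sum_mult_le_of_tails[OF l_mono])
    fix m assume "m \<le> n"
    define r where "r i = (\<Sum>j\<in>{m..<n}. P i j)" for i
    have "(\<Sum>i<n. c i * r i) \<le> (\<Sum>i\<in>{m..<n}. c i)"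
    proof (rule sum_mult_le_sum_top[OF c_mono _ _ \<open>m \<le> n\<close>])
      show "0 \<le> r i \<and> r i \<le> 1" if "i < n" for i
      proof
        show "0 \<le> r i"
          unfolding r_def using P_nonneg that by (intro sum_nonneg) auto
        have "r i \<le> (\<Sum>j<n. P i j)"
          unfolding r_def using P_nonneg that by (intro sum_mono2) auto
        then show "r i \<le> 1"
          using rows[OF that] by simp
      qed
      have "(\<Sum>i<n. r i) = (\<Sum>j\<in>{m..<n}. \<Sum>i<n. P i j)"
        unfolding r_def by (rule sum.swap)
      also have "\<dots> = real (n - m)"
        using cols by simp
      finally show "(\<Sum>i<n. r i) = real (n - m)" .
    qed
    moreover have "(\<Sum>j\<in>{m..<n}. d j) = (\<Sum>i<n. c i * r i) - (\<Sum>j\<in>{m..<n}. c j)"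
      unfolding d_def r_def by (simp add: sum_subtractf sum_distrib_left) (rule sum.swap)
    ultimately show "(\<Sum>j\<in>{m..<n}. d j) \<le> 0"
      by simp
  next
    have "(\<Sum>j<n. \<Sum>i<n. c i * P i j) = (\<Sum>i<n. c i * (\<Sum>j<n. P i j))"
      by (subst sum.swap) (simp add: sum_distrib_left)
    then show "(\<Sum>j<n. d j) = 0"
      using rows by (simp add: d_def sum_subtractf)
  qed
  moreover have "(\<Sum>i<n. \<Sum>j<n. c i * P i j * l j) - (\<Sum>j<n. c j * l j) = (\<Sum>j<n. l j * d j)"
    unfolding d_def by (subst sum.swap) (simp add: algebra_simps sum_subtractf sum_distrib_left sum_distrib_right)
  ultimately show ?thesis
    by simp
qed


section \<open>Local spectral gaps versus the global spectrum\<close>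

definition qubit_gap :: "complex mat \<Rightarrow> real" where
  "qubit_gap R = eigvals_sorted R ! 1 - eigvals_sorted R ! 0"

text \<open>The spectrum of \<open>\<sigma>\<^sub>z\<^sup>(\<^sup>1\<^sup>) + \<sigma>\<^sub>z\<^sup>(\<^sup>2\<^sup>) + \<sigma>\<^sub>z\<^sup>(\<^sup>3\<^sup>)\<close> in increasing order.\<close>

definition collective_levels :: "nat \<Rightarrow> real" where
  "collective_levels j = [-3, -1, -1, -1, 1, 1, 1, 3] ! j"

lemma less_8_cases: "(j :: nat) < 8 \<Longrightarrow> j = 0 \<or> j = 1 \<or> j = 2 \<or> j = 3 \<or> j = 4 \<or> j = 5 \<or> j = 6 \<or> j = 7"
  by auto

lemma collective_levels_mono:
  assumes "i \<le> j" "j < 8"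
  shows "collective_levels i \<le> collective_levels j"
proof -
  have "i < 8"
    using assms by simp
  then show ?thesis
    using less_8_cases[of i] less_8_cases[OF assms(2)] assms(1)
    by (auto simp: collective_levels_def)
qed

lemma sum_8_transpose: "(\<Sum>i<8. f (Transposition.transpose 3 4 i)) = (\<Sum>i<(8 :: nat). f i)"
proof -
  have "Transposition.transpose 3 4 permutes {..<(8 :: nat)}"
    by (rule permutes_swap_id) auto
  from sum.permute[OF this, of f] show ?thesis
    by (simp add: comp_def)
qed

lemma reduced_gaps_eq_diag_sum:
  assumes "\<sigma> \<in> carrier_mat 8 8"
  shows "(Re (red_A \<sigma> $$ (1, 1)) - Re (red_A \<sigma> $$ (0, 0)))
      + (Re (red_B \<sigma> $$ (1, 1)) - Re (red_B \<sigma> $$ (0, 0)))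
      + (Re (red_C \<sigma> $$ (1, 1)) - Re (red_C \<sigma> $$ (0, 0)))
    = (\<Sum>x<8. collective_levels (Transposition.transpose 3 4 x) * Re (\<sigma> $$ (x, x)))"
  by (simp add: red_A_def red_B_def red_C_def collective_levels_def eval_nat_numeral lessThan_Suc
      transpose_def)

lemma qubit_gaps_eq_product_basis_diag:
  assumes UA: "is_eigenbasis 2 UA (red_A \<rho>)" and UB: "is_eigenbasis 2 UB (red_B \<rho>)"
    and UC: "is_eigenbasis 2 UC (red_C \<rho>)" and \<rho>: "\<rho> \<in> carrier_mat 8 8"
  defines "V \<equiv> kron UA (kron UB UC)"
  shows "qubit_gap (red_A \<rho>) + qubit_gap (red_B \<rho>) + qubit_gap (red_C \<rho>)
    = (\<Sum>x<8. collective_levels (Transposition.transpose 3 4 x) * Re ((mat_adjoint V * \<rho> * V) $$ (x, x)))"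
proof -
  have gap: "qubit_gap R = Re ((mat_adjoint U * R * U) $$ (1, 1)) - Re ((mat_adjoint U * R * U) $$ (0, 0))"
    if "is_eigenbasis 2 U R" for U R
    using is_eigenbasis_diag_entry[OF that] by (simp add: qubit_gap_def)
  have unitary: "unitary 2 UA" "unitary 2 UB" "unitary 2 UC"
    using UA UB UC unfolding is_eigenbasis_def by blast+
  let ?\<sigma> = "mat_adjoint V * \<rho> * V"
  have "unitary 8 V"
    using unitary_kron[OF unitary(1) unitary_kron[OF unitary(2,3)]] by (simp add: V_def)
  then have \<sigma>: "?\<sigma> \<in> carrier_mat 8 8"
    using unitary_carrier \<rho> by (meson mat_adjoint_carrier mult_carrier_mat)
  have "qubit_gap (red_A \<rho>) = Re (red_A ?\<sigma> $$ (1, 1)) - Re (red_A ?\<sigma> $$ (0, 0))"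
    "qubit_gap (red_B \<rho>) = Re (red_B ?\<sigma> $$ (1, 1)) - Re (red_B ?\<sigma> $$ (0, 0))"
    "qubit_gap (red_C \<rho>) = Re (red_C ?\<sigma> $$ (1, 1)) - Re (red_C ?\<sigma> $$ (0, 0))"
    unfolding V_def reduced_states_conj_local_unitary[OF unitary \<rho>]
    by (simp_all only: gap[OF UA] gap[OF UB] gap[OF UC])
  then show ?thesis
    using reduced_gaps_eq_diag_sum[OF \<sigma>] by simp
qed

lemma collective_weighted_diag_le:
  assumes M: "unitary 8 M" and l_mono: "\<And>i j. i \<le> j \<Longrightarrow> j < 8 \<Longrightarrow> l i \<le> l j"
  shows "(\<Sum>x<8. collective_levels (Transposition.transpose 3 4 x)
      * Re ((M * mat_diag 8 (\<lambda>j. complex_of_real (l j)) * mat_adjoint M) $$ (x, x)))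
    \<le> (\<Sum>j<8. collective_levels j * l j)"
proof -
  let ?\<tau> = "Transposition.transpose (3 :: nat) 4"
  have "(\<Sum>x<8. collective_levels (?\<tau> x) * Re ((M * mat_diag 8 (\<lambda>j. complex_of_real (l j)) * mat_adjoint M) $$ (x, x)))
      = (\<Sum>x<8. \<Sum>j<8. collective_levels (?\<tau> x) * (cmod (M $$ (x, j)))\<^sup>2 * l j)"
    using diag_conj_diagonal_entry[OF unitary_carrier[OF M]]
    by (intro sum.cong refl) (simp add: sum_distrib_left mult_ac)
  \<comment> \<open>Swapping the basis vectors \<open>3\<close> and \<open>4\<close> sorts the weights.\<close>
  also have "\<dots> = (\<Sum>i<8. \<Sum>j<8. collective_levels i * (cmod (M $$ (?\<tau> i, j)))\<^sup>2 * l j)"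
    by (simp flip: sum_8_transpose[where f = "\<lambda>x. \<Sum>j<8. collective_levels (?\<tau> x) * (cmod (M $$ (x, j)))\<^sup>2 * l j"])
  also have "\<dots> \<le> (\<Sum>j<8. collective_levels j * l j)"
  proof (rule doubly_stochastic_rearrangement[OF _ _ _ collective_levels_mono l_mono])
    have \<tau>: "?\<tau> i < 8" if "i < 8" for i
      using that by (simp add: transpose_def)
    show "(\<Sum>j<8. (cmod (M $$ (?\<tau> i, j)))\<^sup>2) = 1" if "i < 8" for i
      using unitary_row_abs_sq_sum[OF M \<tau>[OF that]] .
    show "(\<Sum>i<8. (cmod (M $$ (?\<tau> i, j)))\<^sup>2) = 1" if "j < 8" for j
      using unitary_col_abs_sq_sum[OF M that] sum_8_transpose[of "\<lambda>i. (cmod (M $$ (i, j)))\<^sup>2"] by simp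
  qed simp
  finally show ?thesis .
qed

theorem qubit_gaps_le_collective:
  assumes \<rho>: "\<rho> \<in> carrier_mat 8 8" and herm: "hermitian \<rho>"
  shows "qubit_gap (red_A \<rho>) + qubit_gap (red_B \<rho>) + qubit_gap (red_C \<rho>)
    \<le> (\<Sum>j<8. collective_levels j * eigvals_sorted \<rho> ! j)"
proof -
  obtain W where W: "is_eigenbasis 8 W \<rho>"
    using hermitian_spectral_decomposition[OF \<rho> herm] by blast
  obtain UA UB UC where UA: "is_eigenbasis 2 UA (red_A \<rho>)" and UB: "is_eigenbasis 2 UB (red_B \<rho>)"
    and UC: "is_eigenbasis 2 UC (red_C \<rho>)"
    using hermitian_spectral_decomposition red_carrier reduced_states_hermitian[OF \<rho> herm] by metis
  define V where "V = kron UA (kron UB UC)"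
  have V: "unitary 8 V"
    using UA UB UC unitary_kron[of 2 UA 4 "kron UB UC"] unitary_kron[of 2 UB 2 UC]
    unfolding V_def is_eigenbasis_def by simp
  have W': "unitary 8 W" "\<rho> = W * mat_diag 8 (\<lambda>j. complex_of_real (eigvals_sorted \<rho> ! j)) * mat_adjoint W"
    using W unfolding is_eigenbasis_def by blast+
  have "mat_adjoint V * \<rho> * V
      = (mat_adjoint V * W) * mat_diag 8 (\<lambda>j. complex_of_real (eigvals_sorted \<rho> ! j)) * mat_adjoint (mat_adjoint V * W)"
    by (subst W'(2), rule sandwich_adjoint_mult[OF unitary_carrier[OF V] unitary_carrier[OF W'(1)]]) simp
  moreover have "unitary 8 (mat_adjoint V * W)"
    using V W'(1) by (intro unitary_mult unitary_adjoint)
  moreover have "eigvals_sorted \<rho> ! i \<le> eigvals_sorted \<rho> ! j" if "i \<le> j" "j < 8" for i j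
    using that length_eigvals_sorted[OF \<rho>] by (intro sorted_nth_mono) (simp_all add: eigvals_sorted_def)
  ultimately show ?thesis
    unfolding qubit_gaps_eq_product_basis_diag[OF UA UB UC \<rho>, folded V_def]
    by (simp add: collective_weighted_diag_le)
qed


section \<open>Spectra of the Hamiltonians\<close>

lemma pauli_carrier [simp]:
  "sigma_x \<in> carrier_mat 2 2" "sigma_y \<in> carrier_mat 2 2" "sigma_z \<in> carrier_mat 2 2" "I2 \<in> carrier_mat 2 2"
  unfolding sigma_x_def sigma_y_def sigma_z_def I2_def by (auto simp: mat_of_rows_list_def)

lemma sigma_z_eq_diag: "sigma_z = mat_diag 2 (\<lambda>k. complex_of_real (if k = 0 then 1 else -1))"
  by (rule eq_matI) (auto simp: sigma_z_def mat_of_rows_list_def mat_diag_def dest!: less_2_cases)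

lemma on_qubit_carrier [simp]: "s \<in> carrier_mat 2 2 \<Longrightarrow> on_qubit k s \<in> carrier_mat 8 8"
  unfolding on_qubit_def by (auto intro!: carrier_matI simp: I2_def)

lemma H0_a_eq_diag:
  "H0_a E = mat_diag 8 (\<lambda>p. complex_of_real (E * ((if p div 4 = 0 then 1 else -1)
     + (if p mod 4 div 2 = 0 then 1 else -1) + (if p mod 2 = 0 then 1 else -1))))"
  unfolding H0_a_def on_qubit_def sigma_z_eq_diag I2_def mat_diag_one[symmetric] kron_mat_diag
  by (rule eq_matI) (auto simp: mat_diag_def mod_mod_cancel)

lemma h_a_eq_diag: "h_a E = mat_diag 2 (\<lambda>k. complex_of_real (E * (if k = 0 then 1 else -1)))"
  unfolding h_a_def sigma_z_eq_diag by (rule eq_matI) (auto simp: mat_diag_def)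

lemma eigvals_sorted_H0_a:
  assumes "E > 0"
  shows "eigvals_sorted (H0_a E) = map (\<lambda>j. E * collective_levels j) [0..<8]"
proof -
  have "eigvals_sorted (H0_a E) = sort [3 * E, E, E, - E, E, - E, - E, - 3 * E]"
    unfolding H0_a_eq_diag eigvals_sorted_mat_diag by (simp add: upt_rec)
  also have "\<dots> = [- 3 * E, - E, - E, - E, E, E, E, 3 * E]"
    using assms by (intro properties_for_sort) (simp_all add: add_mset_commute)
  finally show ?thesis
    by (simp add: upt_rec collective_levels_def)
qed

lemma eigvals_sorted_h_a:
  assumes "E > 0"
  shows "eigvals_sorted (h_a E) = [- E, E]"
  using assms unfolding h_a_eq_diag eigvals_sorted_mat_diag by (simp add: upt_rec)

text \<open>The columns of \<open>xy_eigenbasis\<close> are unit eigenvectors of \<open>\<sigma>\<^sub>x + \<sigma>\<^sub>y\<close> for the eigenvalues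
  \<open>\<surd>2\<close> and \<open>-\<surd>2\<close>.\<close>

definition xy_eigenbasis :: "complex mat" where
  "xy_eigenbasis = mat_of_rows_list 2
     [[1 / complex_of_real (sqrt 2), 1 / complex_of_real (sqrt 2)], [(1 + \<i>) / 2, - (1 + \<i>) / 2]]"

lemma xy_eigenbasis_index:
  "i < 2 \<Longrightarrow> j < 2 \<Longrightarrow> xy_eigenbasis $$ (i, j)
     = (if i = 0 then 1 / complex_of_real (sqrt 2) else if j = 0 then (1 + \<i>) / 2 else - (1 + \<i>) / 2)"
  by (auto simp: xy_eigenbasis_def mat_of_rows_list_def dest!: less_2_cases)

lemma xy_eigenbasis_dim [simp]: "dim_row xy_eigenbasis = 2" "dim_col xy_eigenbasis = 2"
  unfolding xy_eigenbasis_def by (simp_all add: mat_of_rows_list_def)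

lemma xy_eigenbasis_carrier [simp]: "xy_eigenbasis \<in> carrier_mat 2 2"
  by (rule carrier_matI) simp_all

lemma unitary_xy_eigenbasis: "unitary 2 xy_eigenbasis"
proof (rule unitaryI)
  have sqrt2: "complex_of_real (sqrt 2) * complex_of_real (sqrt 2) = 2"
    by (simp flip: of_real_mult)
  fix i j :: nat assume "i < 2" "j < 2"
  then show "(\<Sum>k<2. cnj (xy_eigenbasis $$ (k, i)) * xy_eigenbasis $$ (k, j)) = (if i = j then 1 else 0)"
    using sqrt2 by (auto simp: xy_eigenbasis_index numeral_2_eq_2 lessThan_Suc field_simps complex_eq_iff
        dest!: less_2_cases)
qed simp

lemma pauli_xy_eq:
  "sigma_x + sigma_y = complex_of_real (sqrt 2) \<cdot>\<^sub>m (xy_eigenbasis * sigma_z * mat_adjoint xy_eigenbasis)"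
proof (rule eq_matI)
  have sqrt2: "complex_of_real (sqrt 2) * complex_of_real (sqrt 2) = 2"
    by (simp flip: of_real_mult)
  fix i j assume "i < dim_row (complex_of_real (sqrt 2) \<cdot>\<^sub>m (xy_eigenbasis * sigma_z * mat_adjoint xy_eigenbasis))"
    "j < dim_col (complex_of_real (sqrt 2) \<cdot>\<^sub>m (xy_eigenbasis * sigma_z * mat_adjoint xy_eigenbasis))"
  then have i: "i < 2" and j: "j < 2"
    by auto
  have entry: "(xy_eigenbasis * sigma_z * mat_adjoint xy_eigenbasis) $$ (i, j) = (\<Sum>k<2. xy_eigenbasis $$ (i, k)
      * complex_of_real (if k = 0 then 1 else -1) * cnj (xy_eigenbasis $$ (j, k)))"
    unfolding sigma_z_eq_diag by (rule diag_conj_index[OF xy_eigenbasis_carrier i j])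
  have smult: "(complex_of_real (sqrt 2) \<cdot>\<^sub>m (xy_eigenbasis * sigma_z * mat_adjoint xy_eigenbasis)) $$ (i, j)
      = complex_of_real (sqrt 2) * (xy_eigenbasis * sigma_z * mat_adjoint xy_eigenbasis) $$ (i, j)"
    using i j by (intro index_smult_mat) auto
  show "(sigma_x + sigma_y) $$ (i, j)
      = (complex_of_real (sqrt 2) \<cdot>\<^sub>m (xy_eigenbasis * sigma_z * mat_adjoint xy_eigenbasis)) $$ (i, j)"
    unfolding smult entry using i j sqrt2
    by (auto simp: xy_eigenbasis_index sigma_x_def sigma_y_def mat_of_rows_list_def
        numeral_2_eq_2 lessThan_Suc field_simps complex_eq_iff dest!: less_2_cases)
qed (auto simp: sigma_x_def sigma_y_def mat_of_rows_list_def)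

lemma on_qubit_add:
  assumes "s \<in> carrier_mat 2 2" "t \<in> carrier_mat 2 2"
  shows "on_qubit k (s + t) = on_qubit k s + on_qubit k t"
proof -
  have c: "kron s I2 \<in> carrier_mat 4 4" "kron t I2 \<in> carrier_mat 4 4"
    "kron I2 s \<in> carrier_mat 4 4" "kron I2 t \<in> carrier_mat 4 4"
    using assms kron_carrier[of _ 2 2 _ 2 2] by auto
  show ?thesis
    using assms c unfolding on_qubit_def
    by (simp add: kron_add_left[of s 2 2 t] kron_add_right[of s 2 2 t] kron_add_right[of "kron s I2" 4 4]
        kron_add_right[of "kron I2 s" 4 4])
qed

lemma on_qubit_smult: "on_qubit k (c \<cdot>\<^sub>m s) = c \<cdot>\<^sub>m on_qubit k s"
  unfolding on_qubit_def by (simp add: kron_smult_left kron_smult_right)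

lemma on_qubit_conj:
  assumes T: "unitary 2 T" and s: "s \<in> carrier_mat 2 2"
  shows "kron T (kron T T) * on_qubit k s * mat_adjoint (kron T (kron T T))
    = on_qubit k (T * s * mat_adjoint T)"
proof -
  let ?T' = "mat_adjoint T"
  have c: "T \<in> carrier_mat 2 2" "?T' \<in> carrier_mat 2 2"
    using unitary_carrier[OF T] by auto
  have k4: "kron A B \<in> carrier_mat 4 4" if "A \<in> carrier_mat 2 2" "B \<in> carrier_mat 2 2" for A B
    using kron_carrier[OF that] by simp
  have conj3: "kron T (kron T T) * kron X (kron Y Z) * kron ?T' (kron ?T' ?T')
      = kron (T * X * ?T') (kron (T * Y * ?T') (T * Z * ?T'))"
    if X: "X \<in> carrier_mat 2 2" and Y: "Y \<in> carrier_mat 2 2" and Z: "Z \<in> carrier_mat 2 2" for X Y Z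
  proof -
    have TX: "T * X \<in> carrier_mat 2 2" "T * Y \<in> carrier_mat 2 2" "T * Z \<in> carrier_mat 2 2"
      using c X Y Z by auto
    have "kron T (kron T T) * kron X (kron Y Z) = kron (T * X) (kron T T * kron Y Z)"
      by (rule kron_mult[OF c(1) k4[OF c(1) c(1)] X k4[OF Y Z]])
    also have "kron T T * kron Y Z = kron (T * Y) (T * Z)"
      by (rule kron_mult[OF c(1) c(1) Y Z])
    finally have "kron T (kron T T) * kron X (kron Y Z) * kron ?T' (kron ?T' ?T')
        = kron (T * X) (kron (T * Y) (T * Z)) * kron ?T' (kron ?T' ?T')"
      by simp
    also have "\<dots> = kron (T * X * ?T') (kron (T * Y) (T * Z) * kron ?T' ?T')"
      by (rule kron_mult[OF TX(1) k4[OF TX(2,3)] c(2) k4[OF c(2) c(2)]])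
    also have "kron (T * Y) (T * Z) * kron ?T' ?T' = kron (T * Y * ?T') (T * Z * ?T')"
      by (rule kron_mult[OF TX(2,3) c(2) c(2)])
    finally show ?thesis .
  qed
  have "T * I2 * ?T' = I2"
    using unitary_mult_adjoint[OF T] c by (simp add: I2_def)
  then show ?thesis
    using s unfolding on_qubit_def mat_adjoint_kron by (simp add: conj3)
qed

lemma H0_b_conj: "H0_b E = kron xy_eigenbasis (kron xy_eigenbasis xy_eigenbasis) * H0_a (sqrt 2 * E)
    * mat_adjoint (kron xy_eigenbasis (kron xy_eigenbasis xy_eigenbasis))"
proof -
  let ?S = "xy_eigenbasis * sigma_z * mat_adjoint xy_eigenbasis"
  let ?P = "kron xy_eigenbasis (kron xy_eigenbasis xy_eigenbasis)"
  have S: "?S \<in> carrier_mat 2 2"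
    by (meson mat_adjoint_carrier mult_carrier_mat pauli_carrier(3) xy_eigenbasis_carrier)
  have "H0_b E = complex_of_real E \<cdot>\<^sub>m (on_qubit 1 (complex_of_real (sqrt 2) \<cdot>\<^sub>m ?S)
      + on_qubit 2 (complex_of_real (sqrt 2) \<cdot>\<^sub>m ?S) + on_qubit 3 (complex_of_real (sqrt 2) \<cdot>\<^sub>m ?S))"
    unfolding H0_b_def pauli_xy_eq[symmetric] by (simp add: on_qubit_add)
  also have "\<dots> = complex_of_real (sqrt 2 * E) \<cdot>\<^sub>m (on_qubit 1 ?S + on_qubit 2 ?S + on_qubit 3 ?S)"
  proof -
    have dims: "dim_row (on_qubit k ?S) = 8" "dim_col (on_qubit k ?S) = 8" for k
      using on_qubit_carrier[OF S] by auto
    show ?thesis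
      unfolding on_qubit_smult by (intro eq_matI) (auto simp: dims algebra_simps)
  qed
  also have "\<dots> = ?P * H0_a (sqrt 2 * E) * mat_adjoint ?P"
  proof -
    have "unitary 8 ?P"
      using unitary_kron[OF unitary_xy_eigenbasis unitary_kron[OF unitary_xy_eigenbasis unitary_xy_eigenbasis]]
      by simp
    then have P: "?P \<in> carrier_mat 8 8" "mat_adjoint ?P \<in> carrier_mat 8 8"
      using unitary_carrier by auto
    show ?thesis
      unfolding H0_a_def using P
      by (subst sandwich_smult_add3[of _ 8]) (simp_all add: on_qubit_conj[OF unitary_xy_eigenbasis])
  qed
  finally show ?thesis .
qed

lemma h_b_conj: "h_b E = xy_eigenbasis * h_a (sqrt 2 * E) * mat_adjoint xy_eigenbasis"
proof -
  let ?S = "xy_eigenbasis * sigma_z * mat_adjoint xy_eigenbasis"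
  have S: "?S \<in> carrier_mat 2 2"
    by (meson mat_adjoint_carrier mult_carrier_mat pauli_carrier(3) xy_eigenbasis_carrier)
  have "xy_eigenbasis * h_a (sqrt 2 * E) * mat_adjoint xy_eigenbasis = complex_of_real (sqrt 2 * E) \<cdot>\<^sub>m ?S"
  proof -
    have "xy_eigenbasis * sigma_z \<in> carrier_mat 2 2" "mat_adjoint xy_eigenbasis \<in> carrier_mat 2 2"
      by (simp_all add: mult_carrier_mat[of _ 2 2])
    then show ?thesis
      unfolding h_a_def by (simp add: mult_smult_distrib[of _ 2 2 _ 2] mult_smult_assoc_mat[of _ 2 2 _ 2])
  qed
  moreover have "h_b E = complex_of_real (sqrt 2 * E) \<cdot>\<^sub>m ?S"
    unfolding h_b_def pauli_xy_eq using S by (intro eq_matI) auto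
  ultimately show ?thesis
    by simp
qed

lemma hamiltonian_carrier:
  "H0_a E \<in> carrier_mat 8 8" "H0_b E \<in> carrier_mat 8 8" "h_a E \<in> carrier_mat 2 2" "h_b E \<in> carrier_mat 2 2"
  by (simp_all add: H0_a_def H0_b_def h_a_def h_b_def)

lemma hamiltonian_dim:
  "dim_row (H0_a E) = 8" "dim_row (H0_b E) = 8" "dim_row (h_a E) = 2" "dim_row (h_b E) = 2"
  using carrier_matD(1)[OF hamiltonian_carrier(1)] carrier_matD(1)[OF hamiltonian_carrier(2)]
    carrier_matD(1)[OF hamiltonian_carrier(3)] carrier_matD(1)[OF hamiltonian_carrier(4)] by blast+

lemma hamiltonian_spectra:
  assumes "E > 0" and "(H0 = H0_a E \<and> h = h_a E) \<or> (H0 = H0_b E \<and> h = h_b E)"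
  obtains e where "e > 0" and "dim_row h = 2" and "eigvals_sorted h = [- e, e]"
    and "dim_row H0 = 8" and "eigvals_sorted H0 = map (\<lambda>j. e * collective_levels j) [0..<8]"
  using assms(2)
proof (elim disjE conjE)
  assume "H0 = H0_a E" "h = h_a E"
  then show ?thesis
    using that[of E] assms(1) eigvals_sorted_H0_a eigvals_sorted_h_a hamiltonian_dim by auto
next
  assume H: "H0 = H0_b E" "h = h_b E"
  have P: "unitary 8 (kron xy_eigenbasis (kron xy_eigenbasis xy_eigenbasis))"
    using unitary_kron[OF unitary_xy_eigenbasis unitary_kron[OF unitary_xy_eigenbasis unitary_xy_eigenbasis]]
    by simp
  have "eigvals_sorted (H0_b E) = eigvals_sorted (H0_a (sqrt 2 * E))"
    unfolding H0_b_conj by (rule eigvals_sorted_similar[OF similar_mat_unitary_conj[OF P hamiltonian_carrier(1)]])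
  moreover have "eigvals_sorted (h_b E) = eigvals_sorted (h_a (sqrt 2 * E))"
    unfolding h_b_conj
    by (rule eigvals_sorted_similar[OF similar_mat_unitary_conj[OF unitary_xy_eigenbasis hamiltonian_carrier(3)]])
  moreover have "sqrt 2 * E > 0"
    using assms(1) by simp
  ultimately show ?thesis
    using that[of "sqrt 2 * E"] H eigvals_sorted_H0_a eigvals_sorted_h_a hamiltonian_dim by auto
qed


lemma capacity_antisymmetric:
  assumes d: "dim_row H = d"
    and anti: "\<And>i. i < d \<Longrightarrow> eigvals_sorted H ! (d - 1 - i) = - eigvals_sorted H ! i"
  shows "capacity \<rho> H = 2 * (\<Sum>i<d. eigvals_sorted H ! i * eigvals_sorted \<rho> ! i)"
proof -
  let ?e = "\<lambda>i. eigvals_sorted H ! i" and ?l = "\<lambda>i. eigvals_sorted \<rho> ! i"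
  have "(\<Sum>i<d. ?e i * ?l (d - 1 - i)) = (\<Sum>i<d. ?e (d - 1 - i) * ?l i)"
    by (subst sum.nat_diff_reindex[symmetric]) (auto intro!: sum.cong simp: Suc_diff_Suc)
  also have "\<dots> = (\<Sum>i<d. - (?e i * ?l i))"
    using anti by (intro sum.cong) auto
  also have "\<dots> = - (\<Sum>i<d. ?e i * ?l i)"
    by (simp add: sum_negf)
  finally show ?thesis
    unfolding capacity_def Let_def d by (simp add: right_diff_distrib sum_subtractf)
qed

lemma capacity_qubit:
  assumes "dim_row h = 2" and "eigvals_sorted h = [- e, e]"
  shows "capacity R h = 2 * e * qubit_gap R"
proof -
  have "capacity R h = 2 * (\<Sum>i<2. eigvals_sorted h ! i * eigvals_sorted R ! i)"
    by (rule capacity_antisymmetric[OF assms(1)]) (auto simp: assms(2) dest!: less_2_cases)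
  then show ?thesis
    by (simp add: assms(2) qubit_gap_def numeral_2_eq_2 algebra_simps)
qed

lemma capacity_collective:
  assumes "dim_row H = 8" and "eigvals_sorted H = map (\<lambda>j. e * collective_levels j) [0..<8]"
  shows "capacity \<rho> H = 2 * e * (\<Sum>j<8. collective_levels j * eigvals_sorted \<rho> ! j)"
proof -
  have "capacity \<rho> H = 2 * (\<Sum>j<8. eigvals_sorted H ! j * eigvals_sorted \<rho> ! j)"
    by (rule capacity_antisymmetric[OF assms(1)])
      (auto simp: assms(2) collective_levels_def dest!: less_8_cases)
  then show ?thesis
    by (simp add: assms(2) sum_distrib_left mult_ac)
qed

theorem theorem3:
  fixes E :: real and H0 h Hint \<rho> :: "complex mat"
  assumes "E > 0"
    and "(H0 = H0_a E \<and> h = h_a E) \<or> (H0 = H0_b E \<and> h = h_b E)"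
    and "Hint \<in> carrier_mat 8 8" and "hermitian Hint"
    and "density_matrix 8 \<rho>"
    and "capacity \<rho> (H0 + Hint) \<ge> capacity \<rho> H0"
  shows "capacity (red_A \<rho>) h + capacity (red_B \<rho>) h + capacity (red_C \<rho>) h
           \<le> capacity \<rho> (H0 + Hint)"
proof -
  have \<rho>: "\<rho> \<in> carrier_mat 8 8" "hermitian \<rho>"
    using assms(5) unfolding density_matrix_def by auto
  obtain e where e: "e > 0" and h: "dim_row h = 2" "eigvals_sorted h = [- e, e]"
    and H0: "dim_row H0 = 8" "eigvals_sorted H0 = map (\<lambda>j. e * collective_levels j) [0..<8]"
    using hamiltonian_spectra[OF assms(1,2)] by blast
  have "capacity (red_A \<rho>) h + capacity (red_B \<rho>) h + capacity (red_C \<rho>) h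
      = 2 * e * (qubit_gap (red_A \<rho>) + qubit_gap (red_B \<rho>) + qubit_gap (red_C \<rho>))"
    by (simp add: capacity_qubit[OF h] algebra_simps)
  also have "\<dots> \<le> 2 * e * (\<Sum>j<8. collective_levels j * eigvals_sorted \<rho> ! j)"
    using qubit_gaps_le_collective[OF \<rho>] e by (intro mult_left_mono) auto
  also have "\<dots> = capacity \<rho> H0"
    by (rule capacity_collective[OF H0, symmetric])
  also have "\<dots> \<le> capacity \<rho> (H0 + Hint)"
    by (rule assms(6))
  finally show ?thesis .
qed

end
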